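(* Consider the event-triggered distributed estimator and the centralized estimator described in the context, and suppose: (i) the communication graph is connected, i.e. $\lambda_2(\mathcal{L})>0$; (ii) $G=\sum_{i=1}^N H_i^TH_i$ is full rank; (iii) there is $\epsilon_1>0$ with $\mathbb{E}\{\|V(t)\|^{2+\epsilon_1}\}<\infty$; (iv) the step sizes are $\alpha(t)=\frac{a}{(t+1)^{\tau_1}}$ and $\beta(t)=\frac{b}{(t+1)^{\tau_2}}$ with $a,b>0$, $0<\tau_2\le\tau_1\le 1$, and $\tau_1>\max\{\tau_2+\frac{1}{2+\epsilon_1},0.5\}$; (v) the centralized estimator uses $\alpha_c(t)=\frac{a_c}{(t+1)^{\tau_c}}$ with $\tau_c=\tau_1$ and $a_c=a$. Let $\rho_0=\min_{j\in\mathcal{V}}\rho_j$ and suppose $\rho_0>\tau_1-\tau_2$. Let $\tau_0$ satisfy $0\le\tau_0<\min\{\tau_1-\tau_2-\frac{1}{2+\epsilon_1},\ \rho_0+\tau_2-\tau_1\}$, and if $\tau_1=1$ assume in addition $a>\frac{N\tau_0}{\lambda_{\min}(G)}$. Then for every $i\in\mathcal{V}$, $\mathbb{P}\big(\lim_{t\to\infty}(t+1)^{\tau_0}\|x_i(t)-u(t)\|=0\big)=1$.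
   Context: An unknown parameter $\theta\in\mathbb{R}^n$ is observed by $N$ agents $\mathcal{V}=\{1,\dots,N\}$ via $y_i(t)=H_i\theta+v_i(t)$, $t=0,1,2,\dots$, where $H_i\in\mathbb{R}^{m_i\times n}$ is known and the noise $v_i(t)\in\mathbb{R}^{m_i}$ is zero mean with covariance $R_i$. The stacked noise $V(t)=[v_1(t)^T,\dots,v_N(t)^T]^T$ is i.i.d. over time (noises of different agents at the same time may be correlated). Agents communicate over an undirected graph without self-loops with adjacency matrix $\mathcal{A}=[a_{ij}]\in\{0,1\}^{N\times N}$, neighbor sets $\mathcal{N}_i=\{j: a_{ij}=1\}$, degree matrix $\mathcal{D}$ and Laplacian $\mathcal{L}=\mathcal{D}-\mathcal{A}$. Each agent $i$ has a threshold exponent $\rho_i>0$. Agent $i$ keeps an estimate $x_i(t)\in\mathbb{R}^n$ (arbitrary deterministic initial value $x_i(0)$, which is the first transmitted value). Let $t_k^i$ be the latest triggering (transmission) time of agent $i$. At time $t$, agent $i$ triggers (broadcasts $x_i(t)$ to its neighbors, which then becomes its latest transmitted value) iff $\|x_i(t)-x_i(t_k^i)\|>\frac{1}{(t+1)^{\rho_i}}$. Denoting by $x_j(t_k^j)$ the latest value transmitted by agent $j$ up to and including time $t$, the distributed estimator is $x_i(t+1)=x_i(t)+\alpha(t)H_i^T\big(y_i(t)-H_ix_i(t)\big)+\beta(t)\sum_{j\in\mathcal{N}_i}\big(x_j(t_k^j)-x_i(t)\big)$. The centralized linear estimator uses the same measurements: $u(t+1)=u(t)+\frac{\alpha_c(t)}{N}\sum_{i=1}^N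 H_i^T\big(y_i(t)-H_iu(t)\big)$ with arbitrary deterministic initial value $u(0)$. *)

theory Defs
  imports "HOL-Probability.Probability"
begin

text \<open>Agents are 0,...,N-1. The parameter lives in real^'n (n = CARD('n)).
  Agent i observes m i scalar components; H i l j is entry (l,j) of H_i (l < m i).
  Noise: v i t w l is component l of v_i(t) at sample point w.
  adj i j : adjacency relation of the communication graph.\<close>

definition Hmul :: "(nat \<Rightarrow> nat \<Rightarrow> 'n::finite \<Rightarrow> real) \<Rightarrow> nat \<Rightarrow> real^'n \<Rightarrow> nat \<Rightarrow> real" where
  "Hmul H i x = (\<lambda>l. \<Sum>j\<in>UNIV. H i l j * x $ j)"

definition HTmul :: "(nat \<Rightarrow> nat \<Rightarrow> 'n::finite \<Rightarrow> real) \<Rightarrow> (nat \<Rightarrow> nat) \<Rightarrow> nat \<Rightarrow> (nat \<Rightarrow> real) \<Rightarrow> real^'n" where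
  "HTmul H m i y = (\<chi> j. \<Sum>l<m i. H i l j * y l)"

definition meas :: "(nat \<Rightarrow> nat \<Rightarrow> 'n::finite \<Rightarrow> real) \<Rightarrow> (nat \<Rightarrow> nat \<Rightarrow> 'a \<Rightarrow> nat \<Rightarrow> real)
    \<Rightarrow> real^'n \<Rightarrow> nat \<Rightarrow> nat \<Rightarrow> 'a \<Rightarrow> nat \<Rightarrow> real" where
  "meas H v \<theta> i t \<omega> = (\<lambda>l. Hmul H i \<theta> l + v i t \<omega> l)"

definition innov :: "(nat \<Rightarrow> nat \<Rightarrow> 'n::finite \<Rightarrow> real) \<Rightarrow> (nat \<Rightarrow> nat) \<Rightarrow> (nat \<Rightarrow> nat \<Rightarrow> 'a \<Rightarrow> nat \<Rightarrow> real)
    \<Rightarrow> real^'n \<Rightarrow> nat \<Rightarrow> nat \<Rightarrow> 'a \<Rightarrow> real^'n \<Rightarrow> real^'n" where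
  "innov H m v \<theta> i t \<omega> z = HTmul H m i (\<lambda>l. meas H v \<theta> i t \<omega> l - Hmul H i z l)"

text \<open>State of the event-triggered estimator at time t: the pair (x(t), xhat(t)) where
  x i = x_i(t) and xhat i = latest value transmitted by agent i up to and including time t.
  x_i(0) is the first transmitted value.\<close>
primrec et_state ::
  "nat \<Rightarrow> (nat \<Rightarrow> nat \<Rightarrow> bool) \<Rightarrow> (nat \<Rightarrow> nat \<Rightarrow> 'n::finite \<Rightarrow> real) \<Rightarrow> (nat \<Rightarrow> nat)
   \<Rightarrow> (nat \<Rightarrow> nat \<Rightarrow> 'a \<Rightarrow> nat \<Rightarrow> real) \<Rightarrow> real^'n \<Rightarrow> (nat \<Rightarrow> real) \<Rightarrow> (nat \<Rightarrow> real)
   \<Rightarrow> (nat \<Rightarrow> real) \<Rightarrow> (nat \<Rightarrow> real^'n) \<Rightarrow> 'a \<Rightarrow> nat \<Rightarrow> (nat \<Rightarrow> real^'n) \<times> (nat \<Rightarrow> real^'n)"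
where
  "et_state N adj H m v \<theta> \<alpha> \<beta> \<rho> x0 \<omega> 0 = (x0, x0)"
| "et_state N adj H m v \<theta> \<alpha> \<beta> \<rho> x0 \<omega> (Suc t) =
     (let x = fst (et_state N adj H m v \<theta> \<alpha> \<beta> \<rho> x0 \<omega> t);
          xh = snd (et_state N adj H m v \<theta> \<alpha> \<beta> \<rho> x0 \<omega> t);
          x' = (\<lambda>i. x i + \<alpha> t *\<^sub>R innov H m v \<theta> i t \<omega> (x i)
                      + \<beta> t *\<^sub>R (\<Sum>j\<in>{j. j < N \<and> adj i j}. xh j - x i));
          xh' = (\<lambda>i. if norm (x' i - xh i) > 1 / (real (Suc t) + 1) powr \<rho> i then x' i else xh i)
      in (x', xh'))"

definition et_est where
  "et_est N adj H m v \<theta> \<alpha> \<beta> \<rho> x0 \<omega> t i = fst (et_state N adj H m v \<theta> \<alpha> \<beta> \<rho> x0 \<omega> t) i"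

primrec cent_est ::
  "nat \<Rightarrow> (nat \<Rightarrow> nat \<Rightarrow> 'n::finite \<Rightarrow> real) \<Rightarrow> (nat \<Rightarrow> nat) \<Rightarrow> (nat \<Rightarrow> nat \<Rightarrow> 'a \<Rightarrow> nat \<Rightarrow> real)
   \<Rightarrow> real^'n \<Rightarrow> (nat \<Rightarrow> real) \<Rightarrow> real^'n \<Rightarrow> 'a \<Rightarrow> nat \<Rightarrow> real^'n"
where
  "cent_est N H m v \<theta> \<alpha>c u0 \<omega> 0 = u0"
| "cent_est N H m v \<theta> \<alpha>c u0 \<omega> (Suc t) =
     cent_est N H m v \<theta> \<alpha>c u0 \<omega> t + (\<alpha>c t / real N) *\<^sub>R
       (\<Sum>i<N. innov H m v \<theta> i t \<omega> (cent_est N H m v \<theta> \<alpha>c u0 \<omega> t))"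

definition undirected_simple :: "nat \<Rightarrow> (nat \<Rightarrow> nat \<Rightarrow> bool) \<Rightarrow> bool" where
  "undirected_simple N adj \<longleftrightarrow> (\<forall>i<N. \<forall>j<N. adj i j = adj j i) \<and> (\<forall>i<N. \<not> adj i i)"

definition graph_connected :: "nat \<Rightarrow> (nat \<Rightarrow> nat \<Rightarrow> bool) \<Rightarrow> bool" where
  "graph_connected N adj \<longleftrightarrow>
     (\<forall>i<N. \<forall>j<N. (\<lambda>a b. a < N \<and> b < N \<and> adj a b)\<^sup>*\<^sup>* i j)"

definition gram :: "nat \<Rightarrow> (nat \<Rightarrow> nat \<Rightarrow> 'n::finite \<Rightarrow> real) \<Rightarrow> (nat \<Rightarrow> nat) \<Rightarrow> real^'n^'n" where
  "gram N H m = (\<chi> j k. \<Sum>i<N. \<Sum>l<m i. H i l j * H i l k)"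

definition lambda_min :: "real^'n^'n \<Rightarrow> real" where
  "lambda_min A = Inf {\<mu>. \<exists>x. x \<noteq> 0 \<and> A *v x = \<mu> *\<^sub>R x}"

definition noise_idx :: "nat \<Rightarrow> (nat \<Rightarrow> nat) \<Rightarrow> (nat \<times> nat) set" where
  "noise_idx N m = Sigma {..<N} (\<lambda>i. {..<m i})"

definition noise_space :: "nat \<Rightarrow> (nat \<Rightarrow> nat) \<Rightarrow> ((nat \<times> nat) \<Rightarrow> real) measure" where
  "noise_space N m = PiM (noise_idx N m) (\<lambda>_. borel)"

definition stacked_noise :: "nat \<Rightarrow> (nat \<Rightarrow> nat) \<Rightarrow> (nat \<Rightarrow> nat \<Rightarrow> 'a \<Rightarrow> nat \<Rightarrow> real) \<Rightarrow> nat \<Rightarrow> 'a \<Rightarrow> (nat \<times> nat) \<Rightarrow> real" where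
  "stacked_noise N m v t \<omega> = restrict (\<lambda>(i, l). v i t \<omega> l) (noise_idx N m)"

definition noise_norm :: "nat \<Rightarrow> (nat \<Rightarrow> nat) \<Rightarrow> (nat \<Rightarrow> nat \<Rightarrow> 'a \<Rightarrow> nat \<Rightarrow> real) \<Rightarrow> nat \<Rightarrow> 'a \<Rightarrow> real" where
  "noise_norm N m v t \<omega> = sqrt (\<Sum>i<N. \<Sum>l<m i. (v i t \<omega> l)\<^sup>2)"

end

(*
  Once the noise is controlled the estimate is deterministic. By Borel-Cantelli, a finite moment
  of order 2 + eps1 gives norm V(t) <= (t + 1)^gamma for all large t, almost surely, whenever
  gamma (2 + eps1) > 1. Write x_i - u = (x_i - xbar) + (xbar - u) with xbar the network average.
  The noise enters xbar and u in the same way and cancels in xbar - u; a consensus step contracts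
  the disagreement x_i - xbar at rate beta(t) because the graph is connected, a gradient step
  contracts xbar - u at rate alpha(t) because G is positive definite, and the broadcast errors
  are at most (t + 1)^(-rho0). Chung's lemma for s(t+1) <= (1 - c (t+1)^(-p)) s(t) + K (t+1)^(-p-r)
  then gives in turn polynomial growth of xbar - theta, decay of the disagreement at the rate
  min(tau1 - tau2 - gamma, rho0), and decay of xbar - u at every rate below
  min(tau1 - tau2 - gamma, rho0 + tau2 - tau1), and below a lambda_min(G) / N if tau1 = 1.
*)
theory Submission
  imports Defs "HOL-Real_Asymp.Real_Asymp"
begin

section \<open>Power sequences and Chung's lemma\<close>

lemma one_minus_le_powr_neg:
  fixes x r :: real
  assumes "-1 < x" "0 \<le> r"
  shows "1 - r * x \<le> (1 + x) powr (- r)"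
proof -
  have "r * ln (1 + x) \<le> r * x"
    using ln_le_minus_one[of "1 + x"] assms by (intro mult_left_mono) auto
  then have "1 - r * x \<le> 1 + (- r * ln (1 + x))" by simp
  also have "\<dots> \<le> exp (- r * ln (1 + x))" by (rule exp_ge_add_one_self)
  also have "\<dots> = (1 + x) powr (- r)" using assms by (simp add: powr_def)
  finally show ?thesis .
qed

lemma powr_neg_mult_le_powr_neg_Suc:
  fixes q r :: real
  assumes "1 \<le> q"
  shows "q powr (- r) * (1 - max r 0 / q) \<le> (q + 1) powr (- r)"
proof (cases "0 \<le> r")
  case True
  have "q + 1 = q * (1 + 1 / q)" using assms by (simp add: field_simps)
  then have "(q + 1) powr (- r) = q powr (- r) * (1 + 1 / q) powr (- r)"
    using assms by (simp add: powr_mult)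
  moreover have "1 - r * (1 / q) \<le> (1 + 1 / q) powr (- r)"
    using assms True by (intro one_minus_le_powr_neg) (auto intro: less_le_trans[of _ 0])
  ultimately show ?thesis using True by (simp add: mult_left_mono)
next
  case False
  then show ?thesis using assms by (simp add: powr_mono2)
qed

lemma tendsto_powr_neg_exponent: "e < 0 \<Longrightarrow> (\<lambda>t::nat. (real t + 1) powr e) \<longlonglongrightarrow> 0"
  by real_asymp

lemma eventually_powr_le_powr:
  fixes C D e1 e2 :: real
  assumes "e1 < e2" "0 < D"
  shows "eventually (\<lambda>t::nat. C * (real t + 1) powr e1 \<le> D * (real t + 1) powr e2) sequentially"
proof -
  have "(\<lambda>t::nat. C * (real t + 1) powr (e1 - e2)) \<longlonglongrightarrow> C * 0"
    using assms by (intro tendsto_mult tendsto_const tendsto_powr_neg_exponent) auto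
  then have "eventually (\<lambda>t::nat. C * (real t + 1) powr (e1 - e2) < D) sequentially"
    using assms by (intro order_tendstoD) auto
  then show ?thesis
  proof eventually_elim
    case (elim t)
    have "C * (real t + 1) powr e1 = C * (real t + 1) powr (e1 - e2) * (real t + 1) powr e2"
      by (simp add: powr_diff)
    also have "\<dots> \<le> D * (real t + 1) powr e2"
      using elim by (intro mult_right_mono) auto
    finally show ?case .
  qed
qed

text \<open>One step of the induction behind Chung's lemma below: the forcing term K q^{-(p+r)} is
  absorbed by the contraction as soon as K \<le> B \<delta>, and the remaining slack pays for moving
  the bound from q^{-r} to (q + 1)^{-r}.\<close>
lemma chung_step:
  fixes q p c r K B \<delta> s s' :: real
  assumes q: "1 \<le> q" and rec: "s' \<le> (1 - c * q powr (- p)) * s + K * q powr (- (p + r))"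
    and s: "s \<le> B * q powr (- r)" and B: "0 \<le> B" "K \<le> B * \<delta>"
    and slack: "max r 0 * q powr (p - 1) \<le> c - \<delta>" and small: "c * q powr (- p) \<le> 1"
  shows "s' \<le> B * (q + 1) powr (- r)"
proof -
  define r' where "r' = max r 0"
  have inv: "q powr (- p) * q powr (p - 1) = 1 / q"
  proof -
    have "q powr (- p) * q powr (p - 1) = q powr (- 1)"
      by (simp only: powr_add[symmetric]) simp
    then show ?thesis using q by (simp add: powr_minus_divide)
  qed
  have split: "q powr (- (p + r)) = q powr (- r) * q powr (- p)"
    using q by (simp add: powr_add[symmetric] add.commute)
  have "K + B * (r' * q powr (p - 1)) \<le> c * B"
    using B mult_left_mono[OF slack B(1)] by (simp add: r'_def algebra_simps)
  from mult_left_mono[OF this, of "q powr (- r) * q powr (- p)"]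
  have "q powr (- r) * q powr (- p) * K + B * q powr (- r) * r' * (q powr (- p) * q powr (p - 1))
      \<le> q powr (- r) * q powr (- p) * (c * B)"
    using q by (simp add: distrib_left mult_ac)
  then have forcing: "K * q powr (- (p + r)) + B * q powr (- r) * (r' / q)
      \<le> c * q powr (- p) * (B * q powr (- r))"
    unfolding inv split by (simp add: mult_ac)
  have "s' \<le> (1 - c * q powr (- p)) * (B * q powr (- r)) + K * q powr (- (p + r))"
    using rec mult_left_mono[OF s] small by (smt (verit))
  also have "\<dots> \<le> q powr (- r) * (1 - r' / q) * B"
    using forcing by (simp add: algebra_simps)
  also have "\<dots> \<le> (q + 1) powr (- r) * B"
    using powr_neg_mult_le_powr_neg_Suc[OF q, of r] B(1) unfolding r'_def
    by (intro mult_right_mono) auto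
  finally show ?thesis by (simp add: mult.commute)
qed

text \<open>Chung's lemma. The exponent r may be negative, in which case the conclusion is a growth
  bound.\<close>
lemma chung_powr_bound:
  fixes s :: "nat \<Rightarrow> real" and p c r K :: real
  assumes p: "0 < p" "p \<le> 1" and c: "0 < c" and c_r: "p = 1 \<Longrightarrow> r < c"
    and rec: "eventually (\<lambda>t. s (Suc t) \<le> (1 - c * (real t + 1) powr (- p)) * s t
                                 + K * (real t + 1) powr (- (p + r))) sequentially"
  shows "\<exists>B\<ge>0. eventually (\<lambda>t. s t \<le> B * (real t + 1) powr (- r)) sequentially"
proof -
  obtain \<delta> where \<delta>: "0 < \<delta>"
    and slack: "eventually (\<lambda>t::nat. max r 0 * (real t + 1) powr (p - 1) \<le> c - \<delta>) sequentially"
  proof (cases "p = 1")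
    case True
    then show ?thesis using c c_r by (intro that[of "c - max r 0"]) auto
  next
    case False
    have "(\<lambda>t::nat. max r 0 * (real t + 1) powr (p - 1)) \<longlonglongrightarrow> max r 0 * 0"
      using p False by (intro tendsto_mult tendsto_const tendsto_powr_neg_exponent) auto
    then have "eventually (\<lambda>t::nat. max r 0 * (real t + 1) powr (p - 1) < c / 2) sequentially"
      using c by (intro order_tendstoD) auto
    then show ?thesis using c by (intro that[of "c / 2"]) (auto elim: eventually_mono)
  qed
  have small: "eventually (\<lambda>t::nat. c * (real t + 1) powr (- p) \<le> 1 * (real t + 1) powr 0) sequentially"
    using p by (intro eventually_powr_le_powr) auto
  from eventually_conj[OF rec eventually_conj[OF slack small]] obtain T where T: "\<And>t. T \<le> t \<Longrightarrow>
      s (Suc t) \<le> (1 - c * (real t + 1) powr (- p)) * s t + K * (real t + 1) powr (- (p + r))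
      \<and> max r 0 * (real t + 1) powr (p - 1) \<le> c - \<delta> \<and> c * (real t + 1) powr (- p) \<le> 1"
    unfolding eventually_sequentially by auto
  define B where "B = max 0 (max (K / \<delta>) (s T * (real T + 1) powr r))"
  have B: "0 \<le> B" "K \<le> B * \<delta>"
  proof -
    show "0 \<le> B" by (simp add: B_def)
    have "K / \<delta> \<le> B" by (simp add: B_def)
    then show "K \<le> B * \<delta>" using \<delta> by (simp add: divide_le_eq)
  qed
  have "s t \<le> B * (real t + 1) powr (- r)" if "T \<le> t" for t
    using that
  proof (induction t rule: dec_induct)
    case base
    have "s T = s T * (real T + 1) powr r * (real T + 1) powr (- r)"
      by (simp add: powr_minus field_simps)
    also have "\<dots> \<le> B * (real T + 1) powr (- r)"
      unfolding B_def by (intro mult_right_mono) auto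
    finally show ?case .
  next
    case (step t)
    have "s (Suc t) \<le> B * ((real t + 1) + 1) powr (- r)"
      using T[OF step.hyps(1)] step.IH B
      by (intro chung_step[where q = "real t + 1" and s = "s t" and c = c and p = p and K = K
            and r = r and \<delta> = \<delta>]) auto
    then show ?case by (simp add: add_ac)
  qed
  then show ?thesis using B(1) unfolding eventually_sequentially by blast
qed

section \<open>Consensus on a connected graph\<close>

definition neighbours :: "nat \<Rightarrow> (nat \<Rightarrow> nat \<Rightarrow> bool) \<Rightarrow> nat \<Rightarrow> nat set" where
  "neighbours N adj i = {j. j < N \<and> adj i j}"

definition dirichlet_energy :: "nat \<Rightarrow> (nat \<Rightarrow> nat \<Rightarrow> bool) \<Rightarrow> (nat \<Rightarrow> 'a::real_normed_vector) \<Rightarrow> real"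
  where "dirichlet_energy N adj z = (\<Sum>i<N. \<Sum>j\<in>neighbours N adj i. (norm (z j - z i))\<^sup>2)"

lemma finite_neighbours [simp]: "finite (neighbours N adj i)"
  by (simp add: neighbours_def)

lemma card_neighbours_le: "card (neighbours N adj i) \<le> N"
  using card_mono[of "{..<N}" "neighbours N adj i"] by (auto simp: neighbours_def)

lemma dirichlet_energy_nonneg: "0 \<le> dirichlet_energy N adj z"
  unfolding dirichlet_energy_def by (intro sum_nonneg) auto

lemma sum_neighbours_swap:
  fixes f :: "nat \<Rightarrow> nat \<Rightarrow> 'a::comm_monoid_add"
  assumes sym: "\<forall>i<N. \<forall>j<N. adj i j = adj j i"
  shows "(\<Sum>i<N. \<Sum>j\<in>neighbours N adj i. f i j) = (\<Sum>i<N. \<Sum>j\<in>neighbours N adj i. f j i)"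
proof -
  have filter: "(\<Sum>j\<in>neighbours N adj i. g j) = (\<Sum>j<N. if adj i j then g j else 0)"
    for i and g :: "nat \<Rightarrow> 'a"
    using sum.inter_filter[of "{..<N}" g "adj i"] by (simp add: neighbours_def)
  have "(\<Sum>i<N. \<Sum>j\<in>neighbours N adj i. f i j) = (\<Sum>i<N. \<Sum>j<N. if adj i j then f i j else 0)"
    by (simp add: filter)
  also have "\<dots> = (\<Sum>j<N. \<Sum>i<N. if adj i j then f i j else 0)"
    by (rule sum.swap)
  also have "\<dots> = (\<Sum>j<N. \<Sum>i<N. if adj j i then f i j else 0)"
    using sym by (intro sum.cong refl) auto
  also have "\<dots> = (\<Sum>i<N. \<Sum>j\<in>neighbours N adj i. f j i)"
    by (simp add: filter)
  finally show ?thesis .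
qed

lemma sum_neighbours_diff_eq_0:
  fixes x :: "nat \<Rightarrow> 'a::ab_group_add"
  assumes "\<forall>i<N. \<forall>j<N. adj i j = adj j i"
  shows "(\<Sum>i<N. \<Sum>j\<in>neighbours N adj i. x j - x i) = 0"
  using sum_neighbours_swap[OF assms, of "\<lambda>i j. x j"] by (simp add: sum_subtractf)

lemma sq_norm_diff_le_dirichlet_energy:
  assumes "i < N" "j \<in> neighbours N adj i"
  shows "(norm (z j - z i))\<^sup>2 \<le> dirichlet_energy N adj z"
proof -
  have "(norm (z j - z i))\<^sup>2 \<le> (\<Sum>j\<in>neighbours N adj i. (norm (z j - z i))\<^sup>2)"
    using assms by (intro member_le_sum) auto
  also have "\<dots> \<le> dirichlet_energy N adj z"
    unfolding dirichlet_energy_def using assms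
    by (intro member_le_sum[of i "{..<N}"] sum_nonneg) auto
  finally show ?thesis .
qed

lemma norm_diff_le_dirichlet_energy_path:
  assumes "(\<lambda>a b. a < N \<and> b < N \<and> adj a b)\<^sup>*\<^sup>* i j"
  shows "\<exists>L\<ge>0. \<forall>z::nat \<Rightarrow> 'a::real_normed_vector.
           norm (z i - z j) \<le> L * sqrt (dirichlet_energy N adj z)"
  using assms
proof (induction rule: rtranclp_induct)
  case base
  show ?case by auto
next
  case (step j k)
  then obtain L where L: "0 \<le> L"
    "\<And>z::nat \<Rightarrow> 'a. norm (z i - z j) \<le> L * sqrt (dirichlet_energy N adj z)"
    by blast
  have "norm (z i - z k) \<le> (L + 1) * sqrt (dirichlet_energy N adj z)" for z :: "nat \<Rightarrow> 'a"
  proof -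
    have "norm (z k - z j) = sqrt ((norm (z k - z j))\<^sup>2)" by simp
    also have "\<dots> \<le> sqrt (dirichlet_energy N adj z)"
      using step.hyps(2) by (intro real_sqrt_le_mono sq_norm_diff_le_dirichlet_energy)
        (auto simp: neighbours_def)
    finally have "norm (z j - z k) \<le> sqrt (dirichlet_energy N adj z)"
      by (simp add: norm_minus_commute)
    then show ?thesis
      using L(2)[of z] norm_triangle_ineq[of "z i - z j" "z j - z k"] by (simp add: algebra_simps)
  qed
  then show ?case using L(1) by (intro exI[of _ "L + 1"]) auto
qed

lemma norm_diff_le_dirichlet_energy:
  assumes "graph_connected N adj"
  obtains L where "0 \<le> L" "\<And>(z::nat \<Rightarrow> 'a::real_normed_vector) i j. i < N \<Longrightarrow> j < N \<Longrightarrow>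
      norm (z i - z j) \<le> L * sqrt (dirichlet_energy N adj z)"
proof -
  have "\<forall>p\<in>{..<N} \<times> {..<N}. \<exists>L\<ge>0. \<forall>z::nat \<Rightarrow> 'a.
      norm (z (fst p) - z (snd p)) \<le> L * sqrt (dirichlet_energy N adj z)"
    using assms unfolding graph_connected_def by (auto intro!: norm_diff_le_dirichlet_energy_path)
  then obtain Lp where Lp: "\<And>p. p \<in> {..<N} \<times> {..<N} \<Longrightarrow> 0 \<le> Lp p \<and> (\<forall>z::nat \<Rightarrow> 'a.
      norm (z (fst p) - z (snd p)) \<le> Lp p * sqrt (dirichlet_energy N adj z))"
    by metis
  define L where "L = (\<Sum>p\<in>{..<N} \<times> {..<N}. Lp p)"
  show ?thesis
  proof (rule that)
    show "0 \<le> L" unfolding L_def using Lp by (intro sum_nonneg) auto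
    fix z :: "nat \<Rightarrow> 'a" and i j assume ij: "i < N" "j < N"
    then have "norm (z i - z j) \<le> Lp (i, j) * sqrt (dirichlet_energy N adj z)"
      using Lp[of "(i, j)"] by auto
    also have "\<dots> \<le> L * sqrt (dirichlet_energy N adj z)"
      unfolding L_def using ij Lp
      by (intro mult_right_mono member_le_sum) (auto simp: dirichlet_energy_nonneg)
    finally show "norm (z i - z j) \<le> L * sqrt (dirichlet_energy N adj z)" .
  qed
qed

lemma sum_inner_laplacian:
  fixes z :: "nat \<Rightarrow> 'a::real_inner"
  assumes sym: "\<forall>i<N. \<forall>j<N. adj i j = adj j i"
  shows "(\<Sum>i<N. z i \<bullet> (\<Sum>j\<in>neighbours N adj i. z j - z i)) = - dirichlet_energy N adj z / 2"
proof -
  define s where "s = (\<Sum>i<N. \<Sum>j\<in>neighbours N adj i. z i \<bullet> (z j - z i))"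
  have "s = (\<Sum>i<N. \<Sum>j\<in>neighbours N adj i. z j \<bullet> (z i - z j))"
    unfolding s_def by (rule sum_neighbours_swap[OF sym])
  then have "2 * s = (\<Sum>i<N. \<Sum>j\<in>neighbours N adj i. z i \<bullet> (z j - z i) + z j \<bullet> (z i - z j))"
    unfolding s_def by (simp add: sum.distrib)
  also have "\<dots> = (\<Sum>i<N. \<Sum>j\<in>neighbours N adj i. - (norm (z j - z i))\<^sup>2)"
    by (intro sum.cong refl)
      (simp add: power2_norm_eq_inner inner_diff_left inner_diff_right inner_commute)
  also have "\<dots> = - dirichlet_energy N adj z"
    by (simp add: dirichlet_energy_def sum_negf)
  finally show ?thesis unfolding s_def by (simp add: inner_sum_right)
qed

lemma sq_norm_laplacian_le:
  fixes z :: "nat \<Rightarrow> 'a::real_normed_vector"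
  shows "(norm (\<Sum>j\<in>neighbours N adj i. z j - z i))\<^sup>2
      \<le> N * (\<Sum>j\<in>neighbours N adj i. (norm (z j - z i))\<^sup>2)"
proof -
  have "(norm (\<Sum>j\<in>neighbours N adj i. z j - z i))\<^sup>2 \<le> (\<Sum>j\<in>neighbours N adj i. norm (z j - z i))\<^sup>2"
    by (intro power_mono norm_sum) auto
  also have "\<dots> \<le> (\<Sum>j\<in>neighbours N adj i. (norm (z j - z i))\<^sup>2) * card (neighbours N adj i)"
    by (rule sum_squared_le_sum_of_squares)
  also have "\<dots> \<le> (\<Sum>j\<in>neighbours N adj i. (norm (z j - z i))\<^sup>2) * N"
    using card_neighbours_le by (intro mult_left_mono sum_nonneg) auto
  finally show ?thesis by (simp add: mult.commute)
qed

lemma sum_sq_norm_le_dirichlet_energy: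
  fixes z :: "nat \<Rightarrow> 'a::real_normed_vector"
  assumes N: "0 < N" and zero_sum: "(\<Sum>i<N. z i) = 0"
    and L: "\<And>i j. i < N \<Longrightarrow> j < N \<Longrightarrow> norm (z i - z j) \<le> L * sqrt (dirichlet_energy N adj z)"
  shows "(\<Sum>i<N. (norm (z i))\<^sup>2) \<le> N * L\<^sup>2 * dirichlet_energy N adj z"
proof -
  have "norm (z i) \<le> L * sqrt (dirichlet_energy N adj z)" if "i < N" for i
  proof -
    have "real N *\<^sub>R z i = (\<Sum>j<N. z i - z j)"
      using zero_sum by (simp add: sum_subtractf sum_constant_scaleR)
    then have "real N * norm (z i) = norm (\<Sum>j<N. z i - z j)"
      by (metis norm_scaleR abs_of_nat)
    also have "\<dots> \<le> (\<Sum>j<N. norm (z i - z j))"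
      by (rule norm_sum)
    also have "\<dots> \<le> real N * (L * sqrt (dirichlet_energy N adj z))"
      using L[OF that] sum_bounded_above[of "{..<N}" "\<lambda>j. norm (z i - z j)"] by simp
    finally show ?thesis using N by simp
  qed
  then have "(\<Sum>i<N. (norm (z i))\<^sup>2) \<le> (\<Sum>i<N. (L * sqrt (dirichlet_energy N adj z))\<^sup>2)"
    by (intro sum_mono power_mono) auto
  also have "\<dots> = N * L\<^sup>2 * dirichlet_energy N adj z"
    by (simp add: power_mult_distrib dirichlet_energy_nonneg)
  finally show ?thesis .
qed

lemma sum_sq_norm_laplacian_step_le:
  fixes z :: "nat \<Rightarrow> 'a::real_inner"
  assumes sym: "\<forall>i<N. \<forall>j<N. adj i j = adj j i" and c: "0 \<le> c" "c * N \<le> 1 / 2"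
  shows "(\<Sum>i<N. (norm (z i + c *\<^sub>R (\<Sum>j\<in>neighbours N adj i. z j - z i)))\<^sup>2)
      \<le> (\<Sum>i<N. (norm (z i))\<^sup>2) - c / 2 * dirichlet_energy N adj z"
proof -
  define S where "S = dirichlet_energy N adj z"
  define D where "D i = (\<Sum>j\<in>neighbours N adj i. z j - z i)" for i
  have S: "0 \<le> S" unfolding S_def by (rule dirichlet_energy_nonneg)
  have "(\<Sum>i<N. (norm (D i))\<^sup>2) \<le> (\<Sum>i<N. N * (\<Sum>j\<in>neighbours N adj i. (norm (z j - z i))\<^sup>2))"
    unfolding D_def by (intro sum_mono sq_norm_laplacian_le)
  also have "\<dots> = N * S" by (simp add: S_def dirichlet_energy_def sum_distrib_left)
  finally have D_le: "(\<Sum>i<N. (norm (D i))\<^sup>2) \<le> N * S" .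
  have expand: "(norm (z i + c *\<^sub>R D i))\<^sup>2
      = (norm (z i))\<^sup>2 + 2 * c * (z i \<bullet> D i) + c\<^sup>2 * (norm (D i))\<^sup>2" for i
    by (simp only: power2_norm_eq_inner)
      (simp add: inner_add_left inner_add_right inner_commute algebra_simps power2_eq_square)
  have "(\<Sum>i<N. (norm (z i + c *\<^sub>R D i))\<^sup>2)
      = (\<Sum>i<N. (norm (z i))\<^sup>2) + 2 * c * (\<Sum>i<N. z i \<bullet> D i) + c\<^sup>2 * (\<Sum>i<N. (norm (D i))\<^sup>2)"
    unfolding expand by (simp add: sum.distrib sum_distrib_left)
  also have "\<dots> \<le> (\<Sum>i<N. (norm (z i))\<^sup>2) - c * S + c\<^sup>2 * (N * S)"
    using mult_left_mono[OF D_le, of "c\<^sup>2"] sum_inner_laplacian[OF sym, of z]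
    unfolding D_def S_def by simp
  also have "c\<^sup>2 * (N * S) \<le> c / 2 * S"
  proof -
    have "c\<^sup>2 * (N * S) = (c * N) * (c * S)" by (simp add: power2_eq_square)
    also have "\<dots> \<le> 1 / 2 * (c * S)" using c S by (intro mult_right_mono) auto
    finally show ?thesis by simp
  qed
  finally show ?thesis by (simp add: D_def S_def)
qed

text \<open>A consensus step dissipates a multiple of the Dirichlet energy, which in turn dominates the
  squared norm of a zero-sum configuration.\<close>
lemma L2_set_laplacian_step_le:
  fixes z :: "nat \<Rightarrow> 'a::real_inner"
  assumes sym: "\<forall>i<N. \<forall>j<N. adj i j = adj j i" and N: "0 < N" and L: "1 \<le> L"
    and path: "\<And>i j. i < N \<Longrightarrow> j < N \<Longrightarrow> norm (z i - z j) \<le> L * sqrt (dirichlet_energy N adj z)"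
    and c: "0 \<le> c" "c * N \<le> 1 / 2" and zero_sum: "(\<Sum>i<N. z i) = 0"
  shows "L2_set (\<lambda>i. norm (z i + c *\<^sub>R (\<Sum>j\<in>neighbours N adj i. z j - z i))) {..<N}
      \<le> (1 - c / (4 * N * L\<^sup>2)) * L2_set (\<lambda>i. norm (z i)) {..<N}"
proof -
  define W where "W = (\<Sum>i<N. (norm (z i))\<^sup>2)"
  define \<kappa> where "\<kappa> = 1 / (4 * N * L\<^sup>2)"
  have W: "0 \<le> W" unfolding W_def by (intro sum_nonneg) auto
  have \<kappa>: "0 < \<kappa>" using N L by (simp add: \<kappa>_def)
  have NL: "1 \<le> real N * L\<^sup>2"
  proof -
    have "1 \<le> L\<^sup>2" using L by (simp add: one_le_power)
    moreover have "1 \<le> real N" using N by simp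
    ultimately show ?thesis using mult_mono[of 1 "real N" 1 "L\<^sup>2"] by simp
  qed
  have W_le: "W \<le> N * L\<^sup>2 * dirichlet_energy N adj z"
    unfolding W_def by (rule sum_sq_norm_le_dirichlet_energy[OF N zero_sum path])
  have "(\<Sum>i<N. (norm (z i + c *\<^sub>R (\<Sum>j\<in>neighbours N adj i. z j - z i)))\<^sup>2)
      \<le> W - c / 2 * dirichlet_energy N adj z"
    unfolding W_def by (rule sum_sq_norm_laplacian_step_le[OF sym c])
  also have "\<dots> \<le> W - 2 * \<kappa> * c * W"
  proof -
    have "W / (N * L\<^sup>2) \<le> dirichlet_energy N adj z"
      using W_le NL by (simp add: divide_le_eq mult.commute)
    then have "c * (W / (N * L\<^sup>2)) \<le> c * dirichlet_energy N adj z"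
      using c by (intro mult_left_mono) auto
    then show ?thesis by (simp add: \<kappa>_def)
  qed
  also have "\<dots> \<le> ((1 - \<kappa> * c) * sqrt W)\<^sup>2"
    using W \<kappa> by (simp add: power_mult_distrib power2_eq_square algebra_simps)
  finally have sq_le: "(\<Sum>i<N. (norm (z i + c *\<^sub>R (\<Sum>j\<in>neighbours N adj i. z j - z i)))\<^sup>2)
      \<le> ((1 - \<kappa> * c) * sqrt W)\<^sup>2" .
  have "\<kappa> * c \<le> 1"
  proof -
    have "\<kappa> \<le> 1" using NL by (simp add: \<kappa>_def)
    moreover have "c \<le> 1" using c N mult_left_mono[of 1 "real N" c] by simp
    ultimately show ?thesis using c \<kappa> mult_mono[of \<kappa> 1 c 1] by simp
  qed
  then have "L2_set (\<lambda>i. norm (z i + c *\<^sub>R (\<Sum>j\<in>neighbours N adj i. z j - z i))) {..<N}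
      \<le> (1 - \<kappa> * c) * sqrt W"
    unfolding L2_set_def using sq_le W by (intro real_le_lsqrt) auto
  moreover have "sqrt W = L2_set (\<lambda>i. norm (z i)) {..<N}" by (simp add: W_def L2_set_def)
  moreover have "\<kappa> * c = c / (4 * N * L\<^sup>2)" by (simp add: \<kappa>_def)
  ultimately show ?thesis by simp
qed

lemma laplacian_step_contracts:
  assumes sym: "\<forall>i<N. \<forall>j<N. adj i j = adj j i" and conn: "graph_connected N adj" and N: "0 < N"
  obtains \<kappa> where "0 < \<kappa>" "\<And>(z::nat \<Rightarrow> 'a::real_inner) c. 0 \<le> c \<Longrightarrow> c * N \<le> 1 / 2 \<Longrightarrow>
      (\<Sum>i<N. z i) = 0 \<Longrightarrow>
      L2_set (\<lambda>i. norm (z i + c *\<^sub>R (\<Sum>j\<in>neighbours N adj i. z j - z i))) {..<N}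
        \<le> (1 - \<kappa> * c) * L2_set (\<lambda>i. norm (z i)) {..<N}"
proof -
  obtain L0 where L0: "0 \<le> L0" "\<And>(z::nat \<Rightarrow> 'a) i j. i < N \<Longrightarrow> j < N \<Longrightarrow>
      norm (z i - z j) \<le> L0 * sqrt (dirichlet_energy N adj z)"
    using norm_diff_le_dirichlet_energy[OF conn] by blast
  define L where "L = L0 + 1"
  have path: "norm (z i - z j) \<le> L * sqrt (dirichlet_energy N adj z)"
    if "i < N" "j < N" for z :: "nat \<Rightarrow> 'a" and i j
    using L0(2)[OF that, of z] unfolding L_def
    by (smt (verit) mult_right_mono real_sqrt_ge_zero dirichlet_energy_nonneg)
  have L: "1 \<le> L" using L0(1) by (simp add: L_def)
  have "L2_set (\<lambda>i. norm (z i + c *\<^sub>R (\<Sum>j\<in>neighbours N adj i. z j - z i))) {..<N}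
      \<le> (1 - 1 / (4 * N * L\<^sup>2) * c) * L2_set (\<lambda>i. norm (z i)) {..<N}"
    if "0 \<le> c" "c * N \<le> 1 / 2" "(\<Sum>i<N. z i) = 0" for z :: "nat \<Rightarrow> 'a" and c :: real
    using L2_set_laplacian_step_le[OF sym N L path[of _ _ z] that] by simp
  moreover have "0 < 1 / (4 * N * L\<^sup>2)" using N L by simp
  ultimately show ?thesis using that by blast
qed

section \<open>Positive definite matrices\<close>

lemma self_adjoint_nonneg_eq_0:
  fixes f :: "'a::real_inner \<Rightarrow> 'a"
  assumes lin: "linear f" and self_adjoint: "\<And>x y. x \<bullet> f y = f x \<bullet> y"
    and nonneg: "\<And>y. 0 \<le> y \<bullet> f y" and zero: "x \<bullet> f x = 0"
  shows "f x = 0"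
proof -
  define g where "g = f x"
  define c where "c = g \<bullet> g"
  define d where "d = g \<bullet> f g"
  have d: "0 \<le> d" unfolding d_def by (rule nonneg)
  define t where "t = - c / (d + 1)"
  have "(x + t *\<^sub>R g) \<bullet> f (x + t *\<^sub>R g) = x \<bullet> f x + t * (x \<bullet> f g) + t * (g \<bullet> f x) + t\<^sup>2 * d"
    using lin unfolding d_def
    by (simp add: linear_add linear_scale inner_add_left inner_add_right power2_eq_square algebra_simps)
  also have "\<dots> = 2 * t * c + t\<^sup>2 * d"
    using self_adjoint[of x g] zero by (simp add: c_def g_def)
  finally have "0 \<le> 2 * t * c + t\<^sup>2 * d"
    using nonneg[of "x + t *\<^sub>R g"] by simp
  then have "0 \<le> (2 * t * c + t\<^sup>2 * d) * (d + 1)\<^sup>2" by simp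
  also have "\<dots> = 2 * c * (d + 1) * (t * (d + 1)) + d * (t * (d + 1))\<^sup>2"
    by (simp add: power2_eq_square algebra_simps)
  also have "t * (d + 1) = - c" using d by (simp add: t_def)
  finally have "0 \<le> 2 * c * (d + 1) * - c + d * (- c)\<^sup>2" .
  also have "\<dots> = - c\<^sup>2 * (d + 2)" by (simp add: power2_eq_square algebra_simps)
  finally have "c\<^sup>2 * (d + 2) \<le> 0" by simp
  then have "c = 0" using d by (simp add: mult_le_0_iff)
  then show ?thesis by (simp add: c_def g_def)
qed

lemma matrix_vector_mult_sum_left:
  fixes A :: "'i \<Rightarrow> real^'n^'m"
  shows "(\<Sum>i\<in>I. A i) *v v = (\<Sum>i\<in>I. A i *v v)"
  by (induction I rule: infinite_finite_induct) (auto simp: matrix_vector_mult_add_rdistrib)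

lemma inner_matrix_vector_transpose:
  fixes A :: "real^'n^'n"
  assumes "transpose A = A"
  shows "x \<bullet> (A *v y) = (A *v x) \<bullet> y"
proof -
  have "x \<bullet> (A *v y) = (x v* A) \<bullet> y" by (simp add: dot_lmul_matrix)
  also have "x v* A = transpose A *v x" by simp
  finally show ?thesis using assms by simp
qed

text \<open>A minimiser of the quadratic form on the unit sphere is an eigenvector.\<close>
lemma quadratic_form_min_eigenvector:
  fixes A :: "real^'n^'n"
  assumes sym: "transpose A = A"
  obtains x0 \<mu> where "x0 \<noteq> 0" "A *v x0 = \<mu> *\<^sub>R x0" "\<And>y. \<mu> * (norm y)\<^sup>2 \<le> y \<bullet> (A *v y)"
proof -
  define Q where "Q x = x \<bullet> (A *v x)" for x
  have "continuous_on (sphere 0 1) Q" unfolding Q_def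
    by (intro continuous_on_inner continuous_on_id
        linear_continuous_on[OF matrix_vector_mul_bounded_linear])
  moreover have "sphere (0::real^'n) 1 \<noteq> {}"
    using norm_axis_1 by (metis dist_0_norm empty_iff mem_sphere)
  ultimately obtain x0 where x0: "norm x0 = 1" and min: "\<And>y. norm y = 1 \<Longrightarrow> Q x0 \<le> Q y"
    using continuous_attains_inf[OF compact_sphere, of 0 1 Q] by auto
  define \<mu> where "\<mu> = Q x0"
  have lower: "\<mu> * (norm y)\<^sup>2 \<le> Q y" for y
  proof (cases "y = 0")
    case True then show ?thesis by (simp add: Q_def)
  next
    case False
    have "\<mu> \<le> Q (inverse (norm y) *\<^sub>R y)" unfolding \<mu>_def using False by (intro min) simp
    also have "\<dots> = Q y / (norm y)\<^sup>2"
      by (simp add: Q_def matrix_vector_mult_scaleR power2_eq_square divide_inverse)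
    finally show ?thesis using False by (simp add: le_divide_eq)
  qed
  have "A *v x0 - \<mu> *\<^sub>R x0 = 0"
  proof (rule self_adjoint_nonneg_eq_0[where f = "\<lambda>y. A *v y - \<mu> *\<^sub>R y"])
    show "linear (\<lambda>y. A *v y - \<mu> *\<^sub>R y)"
      unfolding linear_iff
      by (simp add: matrix_vector_right_distrib matrix_vector_mult_scaleR algebra_simps)
    show "x \<bullet> (A *v y - \<mu> *\<^sub>R y) = (A *v x - \<mu> *\<^sub>R x) \<bullet> y" for x y
      using inner_matrix_vector_transpose[OF sym]
      by (simp add: inner_diff_left inner_diff_right inner_commute)
    show "0 \<le> y \<bullet> (A *v y - \<mu> *\<^sub>R y)" for y
      using lower[of y] by (simp add: Q_def inner_diff_right dot_square_norm)
    show "x0 \<bullet> (A *v x0 - \<mu> *\<^sub>R x0) = 0"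
      using x0 by (simp add: \<mu>_def Q_def inner_diff_right dot_square_norm)
  qed
  moreover have "x0 \<noteq> 0" using x0 by auto
  ultimately show ?thesis using that lower unfolding Q_def by simp
qed

lemma lambda_min_pos_definite:
  fixes A :: "real^'n^'n"
  assumes sym: "transpose A = A" and pd: "\<And>x. x \<noteq> 0 \<Longrightarrow> 0 < x \<bullet> (A *v x)"
  shows "0 < lambda_min A" "lambda_min A * (norm x)\<^sup>2 \<le> x \<bullet> (A *v x)"
proof -
  obtain x0 \<mu> where x0: "x0 \<noteq> 0" "A *v x0 = \<mu> *\<^sub>R x0"
    and lower: "\<And>y. \<mu> * (norm y)\<^sup>2 \<le> y \<bullet> (A *v y)"
    using quadratic_form_min_eigenvector[OF sym] by blast
  have "lambda_min A = \<mu>"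
    unfolding lambda_min_def
  proof (rule cInf_eq_minimum)
    show "\<mu> \<in> {\<mu>. \<exists>x. x \<noteq> 0 \<and> A *v x = \<mu> *\<^sub>R x}" using x0 by blast
    fix \<mu>' assume "\<mu>' \<in> {\<mu>. \<exists>x. x \<noteq> 0 \<and> A *v x = \<mu> *\<^sub>R x}"
    then obtain x where "x \<noteq> 0" "A *v x = \<mu>' *\<^sub>R x" by blast
    then have "\<mu> * (norm x)\<^sup>2 \<le> \<mu>' * (norm x)\<^sup>2"
      using lower[of x] by (simp add: dot_square_norm)
    then show "\<mu> \<le> \<mu>'" using \<open>x \<noteq> 0\<close> by simp
  qed
  moreover have "0 < \<mu> * (norm x0)\<^sup>2"
    using pd[OF x0(1)] x0(2) by (simp add: dot_square_norm)
  ultimately show "0 < lambda_min A" "lambda_min A * (norm x)\<^sup>2 \<le> x \<bullet> (A *v x)"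
    using lower[of x] by (simp_all add: zero_less_mult_iff)
qed

lemma norm_minus_scaleR_le:
  fixes f :: "'a::real_inner \<Rightarrow> 'a"
  assumes coercive: "lam * (norm x)\<^sup>2 \<le> x \<bullet> f x" and bounded: "norm (f x) \<le> K * norm x"
    and s: "0 \<le> s"
  shows "norm (x - s *\<^sub>R f x) \<le> (1 - s * lam + s\<^sup>2 * K\<^sup>2 / 2) * norm x"
proof (cases "x = 0")
  case True
  then show ?thesis using bounded by simp
next
  case False
  define y where "y = 1 - 2 * s * lam + s\<^sup>2 * K\<^sup>2"
  have "(norm (x - s *\<^sub>R f x))\<^sup>2 = (norm x)\<^sup>2 - 2 * s * (x \<bullet> f x) + s\<^sup>2 * (norm (f x))\<^sup>2"
    by (simp only: power2_norm_eq_inner)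
      (simp add: inner_diff_left inner_diff_right inner_commute power2_eq_square algebra_simps)
  also have "\<dots> \<le> (norm x)\<^sup>2 - 2 * s * (lam * (norm x)\<^sup>2) + s\<^sup>2 * (K * norm x)\<^sup>2"
  proof -
    have "2 * s * (lam * (norm x)\<^sup>2) \<le> 2 * s * (x \<bullet> f x)"
      using s coercive by (intro mult_left_mono) auto
    moreover have "s\<^sup>2 * (norm (f x))\<^sup>2 \<le> s\<^sup>2 * (K * norm x)\<^sup>2"
      using bounded by (intro mult_left_mono power_mono) auto
    ultimately show ?thesis by linarith
  qed
  also have "\<dots> = y * (norm x)\<^sup>2" by (simp add: y_def algebra_simps power_mult_distrib)
  finally have sq: "(norm (x - s *\<^sub>R f x))\<^sup>2 \<le> y * (norm x)\<^sup>2" .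
  then have "0 \<le> y * (norm x)\<^sup>2"
    using zero_le_power2[of "norm (x - s *\<^sub>R f x)"] by linarith
  then have "0 \<le> y" using False by (simp add: zero_le_mult_iff)
  have "y \<le> ((1 + y) / 2)\<^sup>2"
    using zero_le_power2[of "(1 - y) / 2"] by (simp add: power2_eq_square field_simps)
  then have "y * (norm x)\<^sup>2 \<le> ((1 + y) / 2 * norm x)\<^sup>2"
    unfolding power_mult_distrib by (intro mult_right_mono) auto
  with sq have "(norm (x - s *\<^sub>R f x))\<^sup>2 \<le> ((1 + y) / 2 * norm x)\<^sup>2" by linarith
  then have "norm (x - s *\<^sub>R f x) \<le> (1 + y) / 2 * norm x"
    by (rule power2_le_imp_le) (use \<open>0 \<le> y\<close> in simp)
  moreover have "(1 + y) / 2 = 1 - s * lam + s\<^sup>2 * K\<^sup>2 / 2" by (simp add: y_def field_simps)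
  ultimately show ?thesis by simp
qed

section \<open>The abstract estimator recursion\<close>

text \<open>An abstract form of both estimators: A i stands for H_i^T H_i, noise t i for H_i^T v_i(t),
  xh t j for the value last broadcast by agent j, and u for the centralized estimate.\<close>
locale consensus_recursion =
  fixes N :: nat and adj :: "nat \<Rightarrow> nat \<Rightarrow> bool"
    and A :: "nat \<Rightarrow> real^'n^'n" and \<theta> :: "real^'n"
    and \<alpha> \<beta> :: "nat \<Rightarrow> real"
    and x xh noise :: "nat \<Rightarrow> nat \<Rightarrow> real^'n" and u :: "nat \<Rightarrow> real^'n"
  assumes N_pos: "0 < N"
    and adj_sym: "\<forall>i<N. \<forall>j<N. adj i j = adj j i"
    and alpha_nonneg: "\<And>t. 0 \<le> \<alpha> t" and beta_nonneg: "\<And>t. 0 \<le> \<beta> t"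
    and x_Suc: "\<And>t i. i < N \<Longrightarrow> x (Suc t) i = x t i + \<alpha> t *\<^sub>R (A i *v (\<theta> - x t i) + noise t i)
                  + \<beta> t *\<^sub>R (\<Sum>j\<in>neighbours N adj i. xh t j - x t i)"
    and u_Suc: "\<And>t. u (Suc t) = u t + (\<alpha> t / N) *\<^sub>R (\<Sum>i<N. A i *v (\<theta> - u t) + noise t i)"
begin

definition G :: "real^'n^'n" where
  "G = (\<Sum>i<N. A i)"

definition K_A :: real where
  "K_A = (\<Sum>i<N. onorm ((*v) (A i)))"

definition mean :: "nat \<Rightarrow> real^'n" where
  "mean t = (1 / N) *\<^sub>R (\<Sum>i<N. x t i)"

definition disagreement :: "nat \<Rightarrow> real" where
  "disagreement t = L2_set (\<lambda>i. norm (x t i - mean t)) {..<N}"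

definition trigger_error :: "nat \<Rightarrow> real" where
  "trigger_error t = (\<Sum>j<N. norm (xh t j - x t j))"

definition noise_size :: "nat \<Rightarrow> real" where
  "noise_size t = (\<Sum>i<N. norm (noise t i))"

text \<open>Everything that moves agent i apart from plain consensus on the exact states x t j.\<close>
definition drift :: "nat \<Rightarrow> nat \<Rightarrow> real^'n" where
  "drift t i = \<alpha> t *\<^sub>R (A i *v (\<theta> - x t i) + noise t i)
     + \<beta> t *\<^sub>R (\<Sum>j\<in>neighbours N adj i. xh t j - x t j)"

lemma K_A_nonneg: "0 \<le> K_A"
  unfolding K_A_def by (intro sum_nonneg onorm_pos_le matrix_vector_mul_bounded_linear)

lemma norm_A_le: "i < N \<Longrightarrow> norm (A i *v v) \<le> K_A * norm v"
proof -
  assume "i < N"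
  then have "onorm ((*v) (A i)) \<le> K_A"
    unfolding K_A_def
    by (intro member_le_sum onorm_pos_le matrix_vector_mul_bounded_linear) auto
  then show ?thesis
    using onorm[OF matrix_vector_mul_bounded_linear, of "A i" v]
    by (meson mult_right_mono norm_ge_zero order_trans)
qed

lemma norm_neighbours_trigger_le: "norm (\<Sum>j\<in>neighbours N adj i. xh t j - x t j) \<le> trigger_error t"
proof -
  have "norm (\<Sum>j\<in>neighbours N adj i. xh t j - x t j) \<le> (\<Sum>j\<in>neighbours N adj i. norm (xh t j - x t j))"
    by (rule norm_sum)
  also have "\<dots> \<le> trigger_error t"
    unfolding trigger_error_def by (intro sum_mono2) (auto simp: neighbours_def)
  finally show ?thesis .
qed

lemma disagreement_nonneg: "0 \<le> disagreement t"
  by (simp add: disagreement_def)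

lemma norm_dev_le: "i < N \<Longrightarrow> norm (x t i - mean t) \<le> disagreement t"
  unfolding disagreement_def by (intro member_le_L2_set) auto

lemma sum_dev_eq_0: "(\<Sum>i<N. x t i - mean t) = 0"
proof -
  have "(\<Sum>i<N. mean t) = real N *\<^sub>R mean t" by (simp only: sum_constant_scaleR card_lessThan)
  then show ?thesis using N_pos by (simp add: mean_def sum_subtractf)
qed

lemma x_Suc_drift:
  "i < N \<Longrightarrow> x (Suc t) i = x t i + \<beta> t *\<^sub>R (\<Sum>j\<in>neighbours N adj i. x t j - x t i) + drift t i"
proof -
  have "(\<Sum>j\<in>neighbours N adj i. xh t j - x t i)
      = (\<Sum>j\<in>neighbours N adj i. x t j - x t i) + (\<Sum>j\<in>neighbours N adj i. xh t j - x t j)"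
    unfolding sum.distrib[symmetric] by (intro sum.cong) auto
  then show "i < N \<Longrightarrow> ?thesis" by (simp add: x_Suc drift_def scaleR_add_right algebra_simps)
qed

lemma mean_Suc: "mean (Suc t) = mean t + (1 / N) *\<^sub>R (\<Sum>i<N. drift t i)"
proof -
  have "(\<Sum>i<N. x (Suc t) i)
      = (\<Sum>i<N. x t i) + \<beta> t *\<^sub>R (\<Sum>i<N. \<Sum>j\<in>neighbours N adj i. x t j - x t i) + (\<Sum>i<N. drift t i)"
    by (simp add: x_Suc_drift sum.distrib scaleR_sum_right)
  then show ?thesis
    by (simp add: mean_def sum_neighbours_diff_eq_0[OF adj_sym] scaleR_add_right)
qed

lemma dev_Suc:
  assumes "i < N"
  shows "x (Suc t) i - mean (Suc t)
      = ((x t i - mean t) + \<beta> t *\<^sub>R (\<Sum>j\<in>neighbours N adj i. (x t j - mean t) - (x t i - mean t)))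
        + (drift t i - (1 / N) *\<^sub>R (\<Sum>k<N. drift t k))"
  using assms by (simp add: x_Suc_drift mean_Suc algebra_simps)

lemma disagreement_Suc_le:
  assumes contracts: "L2_set (\<lambda>i. norm ((x t i - mean t)
      + \<beta> t *\<^sub>R (\<Sum>j\<in>neighbours N adj i. (x t j - mean t) - (x t i - mean t)))) {..<N}
      \<le> q * disagreement t"
  shows "disagreement (Suc t) \<le> q * disagreement t + 2 * (\<Sum>i<N. norm (drift t i))"
proof -
  define y where
    "y i = (x t i - mean t) + \<beta> t *\<^sub>R (\<Sum>j\<in>neighbours N adj i. (x t j - mean t) - (x t i - mean t))"
    for i
  define g where "g i = drift t i - (1 / N) *\<^sub>R (\<Sum>k<N. drift t k)" for i
  have "disagreement (Suc t) = L2_set (\<lambda>i. norm (y i + g i)) {..<N}"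
    unfolding disagreement_def y_def g_def by (intro L2_set_cong) (auto simp: dev_Suc)
  also have "\<dots> \<le> L2_set (\<lambda>i. norm (y i) + norm (g i)) {..<N}"
    by (intro L2_set_mono norm_triangle_ineq) auto
  also have "\<dots> \<le> L2_set (\<lambda>i. norm (y i)) {..<N} + L2_set (\<lambda>i. norm (g i)) {..<N}"
    by (rule L2_set_triangle_ineq)
  also have "L2_set (\<lambda>i. norm (g i)) {..<N} \<le> (\<Sum>i<N. norm (g i))"
    by (rule L2_set_le_sum) auto
  also have "\<dots> \<le> (\<Sum>i<N. norm (drift t i) + (1 / N) * norm (\<Sum>k<N. drift t k))"
    unfolding g_def by (intro sum_mono order.trans[OF norm_triangle_ineq4]) simp
  also have "\<dots> \<le> 2 * (\<Sum>i<N. norm (drift t i))"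
    using N_pos norm_sum[of "drift t" "{..<N}"] by (simp add: sum.distrib)
  finally show ?thesis using contracts unfolding y_def by linarith
qed

lemma norm_drift_le:
  assumes "i < N"
  shows "norm (drift t i) \<le> \<alpha> t * (K_A * (disagreement t + norm (mean t - \<theta>)) + norm (noise t i))
      + \<beta> t * trigger_error t"
proof -
  have "norm (\<theta> - x t i) \<le> disagreement t + norm (mean t - \<theta>)"
    using norm_triangle_ineq[of "x t i - mean t" "mean t - \<theta>"] norm_dev_le[OF assms, of t]
    by (simp add: norm_minus_commute)
  then have "norm (A i *v (\<theta> - x t i)) \<le> K_A * (disagreement t + norm (mean t - \<theta>))"
    using norm_A_le[OF assms] K_A_nonneg by (meson mult_left_mono order_trans)
  then have step: "norm (A i *v (\<theta> - x t i) + noise t i)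
      \<le> K_A * (disagreement t + norm (mean t - \<theta>)) + norm (noise t i)"
    using norm_triangle_ineq[of "A i *v (\<theta> - x t i)" "noise t i"] by linarith
  have "norm (drift t i) \<le> norm (\<alpha> t *\<^sub>R (A i *v (\<theta> - x t i) + noise t i))
      + norm (\<beta> t *\<^sub>R (\<Sum>j\<in>neighbours N adj i. xh t j - x t j))"
    unfolding drift_def by (rule norm_triangle_ineq)
  also have "\<dots> = \<alpha> t * norm (A i *v (\<theta> - x t i) + noise t i)
      + \<beta> t * norm (\<Sum>j\<in>neighbours N adj i. xh t j - x t j)"
    using alpha_nonneg[of t] beta_nonneg[of t] by simp
  finally show ?thesis
    using mult_left_mono[OF step alpha_nonneg[of t]]
      mult_left_mono[OF norm_neighbours_trigger_le[of t i] beta_nonneg[of t]]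
    by linarith
qed

lemma sum_norm_drift_le:
  "(\<Sum>i<N. norm (drift t i)) \<le> \<alpha> t * (N * K_A * (disagreement t + norm (mean t - \<theta>)) + noise_size t)
     + \<beta> t * (N * trigger_error t)"
proof -
  have "(\<Sum>i<N. norm (drift t i)) \<le> (\<Sum>i<N. \<alpha> t * (K_A * (disagreement t + norm (mean t - \<theta>))
      + norm (noise t i)) + \<beta> t * trigger_error t)"
    by (intro sum_mono norm_drift_le) simp
  also have "\<dots> = \<alpha> t * (N * K_A * (disagreement t + norm (mean t - \<theta>)) + noise_size t)
      + \<beta> t * (N * trigger_error t)"
    by (simp add: noise_size_def sum.distrib sum_distrib_left algebra_simps)
  finally show ?thesis .
qed

lemma sum_drift:
  "(\<Sum>i<N. drift t i) = \<alpha> t *\<^sub>R (G *v (\<theta> - mean t) - (\<Sum>i<N. A i *v (x t i - mean t)) + (\<Sum>i<N. noise t i))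
     + \<beta> t *\<^sub>R (\<Sum>i<N. \<Sum>j\<in>neighbours N adj i. xh t j - x t j)"
proof -
  have "(\<Sum>i<N. drift t i) = \<alpha> t *\<^sub>R (\<Sum>i<N. A i *v (\<theta> - x t i) + noise t i)
      + \<beta> t *\<^sub>R (\<Sum>i<N. \<Sum>j\<in>neighbours N adj i. xh t j - x t j)"
    by (simp add: drift_def sum.distrib scaleR_sum_right scaleR_add_right)
  moreover have "(\<Sum>i<N. A i *v (\<theta> - x t i) + noise t i)
      = G *v (\<theta> - mean t) - (\<Sum>i<N. A i *v (x t i - mean t)) + (\<Sum>i<N. noise t i)"
    by (simp add: G_def matrix_vector_mult_sum_left sum.distrib sum_subtractf
        matrix_vector_mult_diff_distrib algebra_simps)
  ultimately show ?thesis by simp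
qed

lemma norm_sum_A_dev_le: "norm (\<Sum>i<N. A i *v (x t i - mean t)) \<le> N * (K_A * disagreement t)"
proof -
  have "norm (\<Sum>i<N. A i *v (x t i - mean t)) \<le> (\<Sum>i<N. norm (A i *v (x t i - mean t)))"
    by (rule norm_sum)
  also have "\<dots> \<le> (\<Sum>i<N. K_A * disagreement t)"
    using norm_A_le norm_dev_le K_A_nonneg
    by (intro sum_mono) (meson lessThan_iff mult_left_mono order_trans)
  finally show ?thesis by simp
qed

lemma norm_sum_trigger_le:
  "norm (\<Sum>i<N. \<Sum>j\<in>neighbours N adj i. xh t j - x t j) \<le> N * trigger_error t"
proof -
  have "norm (\<Sum>i<N. \<Sum>j\<in>neighbours N adj i. xh t j - x t j)
      \<le> (\<Sum>i<N. norm (\<Sum>j\<in>neighbours N adj i. xh t j - x t j))"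
    by (rule norm_sum)
  also have "\<dots> \<le> (\<Sum>i<N. trigger_error t)"
    by (intro sum_mono norm_neighbours_trigger_le)
  finally show ?thesis by simp
qed

lemma norm_mean_minus_theta_Suc_le:
  "norm (mean (Suc t) - \<theta>) \<le> norm ((mean t - \<theta>) - (\<alpha> t / N) *\<^sub>R (G *v (mean t - \<theta>)))
     + \<alpha> t * (K_A * disagreement t) + \<alpha> t / N * noise_size t + \<beta> t * trigger_error t"
proof -
  define P where "P = (\<Sum>i<N. A i *v (x t i - mean t))"
  define Q where "Q = (\<Sum>i<N. \<Sum>j\<in>neighbours N adj i. xh t j - x t j)"
  have "mean (Suc t) - \<theta> = ((mean t - \<theta>) - (\<alpha> t / N) *\<^sub>R (G *v (mean t - \<theta>)))
      - (\<alpha> t / N) *\<^sub>R P + (\<alpha> t / N) *\<^sub>R (\<Sum>i<N. noise t i) + (\<beta> t / N) *\<^sub>R Q"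
    unfolding mean_Suc sum_drift P_def Q_def
    by (simp add: matrix_vector_mult_diff_distrib algebra_simps)
  also have "norm \<dots> \<le> norm ((mean t - \<theta>) - (\<alpha> t / N) *\<^sub>R (G *v (mean t - \<theta>)))
      + \<alpha> t / N * norm P + \<alpha> t / N * norm (\<Sum>i<N. noise t i) + \<beta> t / N * norm Q"
    using alpha_nonneg[of t] beta_nonneg[of t] norm_triangle_ineq norm_triangle_ineq4
    by (smt (verit) norm_scaleR abs_of_nonneg divide_nonneg_nonneg of_nat_0_le_iff)
  also have "\<dots> \<le> norm ((mean t - \<theta>) - (\<alpha> t / N) *\<^sub>R (G *v (mean t - \<theta>)))
      + \<alpha> t / N * (N * (K_A * disagreement t)) + \<alpha> t / N * noise_size t
      + \<beta> t / N * (N * trigger_error t)"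
    using alpha_nonneg[of t] beta_nonneg[of t] norm_sum_A_dev_le norm_sum_trigger_le
      norm_sum[of "noise t" "{..<N}"]
    unfolding P_def Q_def noise_size_def
    by (intro add_mono mult_left_mono order_refl) auto
  finally show ?thesis using N_pos by simp
qed

lemma norm_mean_minus_u_Suc_le:
  "norm (mean (Suc t) - u (Suc t)) \<le> norm ((mean t - u t) - (\<alpha> t / N) *\<^sub>R (G *v (mean t - u t)))
     + \<alpha> t * (K_A * disagreement t) + \<beta> t * trigger_error t"
proof -
  define P where "P = (\<Sum>i<N. A i *v (x t i - mean t))"
  define Q where "Q = (\<Sum>i<N. \<Sum>j\<in>neighbours N adj i. xh t j - x t j)"
  have sum_u: "(\<Sum>i<N. A i *v (\<theta> - u t) + noise t i) = G *v (\<theta> - u t) + (\<Sum>i<N. noise t i)"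
    by (simp add: G_def matrix_vector_mult_sum_left sum.distrib)
  have "mean (Suc t) - u (Suc t) = ((mean t - u t) - (\<alpha> t / N) *\<^sub>R (G *v (mean t - u t)))
      - (\<alpha> t / N) *\<^sub>R P + (\<beta> t / N) *\<^sub>R Q"
    unfolding mean_Suc sum_drift u_Suc sum_u
    by (simp add: P_def Q_def matrix_vector_mult_diff_distrib algebra_simps)
  also have "norm \<dots> \<le> norm ((mean t - u t) - (\<alpha> t / N) *\<^sub>R (G *v (mean t - u t)))
      + \<alpha> t / N * norm P + \<beta> t / N * norm Q"
    using alpha_nonneg[of t] beta_nonneg[of t] norm_triangle_ineq norm_triangle_ineq4
    by (smt (verit) norm_scaleR abs_of_nonneg divide_nonneg_nonneg of_nat_0_le_iff)
  also have "\<dots> \<le> norm ((mean t - u t) - (\<alpha> t / N) *\<^sub>R (G *v (mean t - u t)))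
      + \<alpha> t / N * (N * (K_A * disagreement t)) + \<beta> t / N * (N * trigger_error t)"
    using alpha_nonneg[of t] beta_nonneg[of t] norm_sum_A_dev_le norm_sum_trigger_le
    unfolding P_def Q_def by (intro add_mono mult_left_mono order_refl) auto
  finally show ?thesis using N_pos by simp
qed

end

lemma lyapunov_combination:
  fixes Z W Z' W' \<mu> k c a K N F1 F2 :: real
  assumes Z': "Z' \<le> (1 - k) * Z + 2 * N * K * a * (Z + W) + F1"
    and W': "W' \<le> (1 - c) * W + K * a * Z + F2"
    and nonneg: "0 \<le> Z" "0 \<le> W" "0 \<le> \<mu>"
    and k: "(2 * N + \<mu>) * K * a + c / 2 \<le> k" and \<mu>: "2 * N * K * a \<le> \<mu> * (c / 2)"
  shows "Z' + \<mu> * W' \<le> (1 - c / 2) * (Z + \<mu> * W) + (F1 + \<mu> * F2)"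
proof -
  have "Z' + \<mu> * W' \<le> (1 - k) * Z + 2 * N * K * a * (Z + W) + F1 + \<mu> * ((1 - c) * W + K * a * Z + F2)"
    using add_mono[OF Z' mult_left_mono[OF W' nonneg(3)]] .
  also have "\<dots> = (1 - k + (2 * N + \<mu>) * K * a) * Z + (\<mu> * (1 - c) + 2 * N * K * a) * W + (F1 + \<mu> * F2)"
    by (simp add: algebra_simps)
  also have "\<dots> \<le> (1 - c / 2) * Z + (\<mu> * (1 - c / 2)) * W + (F1 + \<mu> * F2)"
  proof -
    have "(1 - k + (2 * N + \<mu>) * K * a) * Z \<le> (1 - c / 2) * Z"
      using k nonneg by (intro mult_right_mono) auto
    moreover have "(\<mu> * (1 - c) + 2 * N * K * a) * W \<le> (\<mu> * (1 - c / 2)) * W"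
      using \<mu> nonneg by (intro mult_right_mono) (auto simp: algebra_simps)
    ultimately show ?thesis by linarith
  qed
  also have "\<dots> = (1 - c / 2) * (Z + \<mu> * W) + (F1 + \<mu> * F2)"
    by (simp add: algebra_simps)
  finally show ?thesis .
qed

locale consensus_recursion_rates =
  consensus_recursion N adj A \<theta> \<alpha> \<beta> x xh noise u
  for N adj and A :: "nat \<Rightarrow> real^'n^'n" and \<theta> \<alpha> \<beta> x xh noise u +
  fixes \<kappa> lam a b \<tau>1 \<tau>2 \<rho> \<gamma> C :: real
  assumes kappa_pos: "0 < \<kappa>"
    and laplacian_contracts: "\<And>(z :: nat \<Rightarrow> real^'n) (c :: real).
      0 \<le> c \<Longrightarrow> c * N \<le> 1 / 2 \<Longrightarrow> (\<Sum>i<N. z i) = 0 \<Longrightarrow>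
      L2_set (\<lambda>i. norm (z i + c *\<^sub>R (\<Sum>j\<in>neighbours N adj i. z j - z i))) {..<N}
        \<le> (1 - \<kappa> * c) * L2_set (\<lambda>i. norm (z i)) {..<N}"
    and lam_pos: "0 < lam" and G_coercive: "\<And>v. lam * (norm v)\<^sup>2 \<le> v \<bullet> (G *v v)"
    and alpha_eq: "\<And>t. \<alpha> t = a * (real t + 1) powr (- \<tau>1)"
    and beta_eq: "\<And>t. \<beta> t = b * (real t + 1) powr (- \<tau>2)"
    and a_pos: "0 < a" and b_pos: "0 < b"
    and tau2_pos: "0 < \<tau>2" and tau2_less: "\<tau>2 < \<tau>1" and tau1_le: "\<tau>1 \<le> 1"
    and rho_gt: "\<tau>1 - \<tau>2 < \<rho>" and gamma_nonneg: "0 \<le> \<gamma>" and C_nonneg: "0 \<le> C"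
    and trigger_le: "\<And>t j. j < N \<Longrightarrow> norm (xh t j - x t j) \<le> (real t + 1) powr (- \<rho>)"
    and noise_le: "eventually (\<lambda>t. noise_size t \<le> C * (real t + 1) powr \<gamma>) sequentially"
begin

lemma trigger_error_le: "trigger_error t \<le> N * (real t + 1) powr (- \<rho>)"
proof -
  have "trigger_error t \<le> (\<Sum>j<N. (real t + 1) powr (- \<rho>))"
    unfolding trigger_error_def by (intro sum_mono trigger_le) simp
  then show ?thesis by simp
qed

lemma eventually_beta_small: "eventually (\<lambda>t. \<beta> t * N \<le> 1 / 2) sequentially"
  using eventually_powr_le_powr[of "- \<tau>2" 0 "1 / 2" "b * N"] tau2_pos
  by (simp add: beta_eq algebra_simps)

lemma eventually_disagreement_Suc_le:
  "eventually (\<lambda>t. disagreement (Suc t) \<le> (1 - \<kappa> * \<beta> t) * disagreement t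
     + 2 * (\<Sum>i<N. norm (drift t i))) sequentially"
  using eventually_beta_small
proof eventually_elim
  case (elim t)
  show ?case
    using laplacian_contracts[where z = "\<lambda>i. x t i - mean t" and c = "\<beta> t",
        OF beta_nonneg elim sum_dev_eq_0]
    by (intro disagreement_Suc_le) (simp add: disagreement_def)
qed

lemma eventually_gradient_step_le:
  assumes c: "c < a * lam / N"
  shows "eventually (\<lambda>t. \<forall>v. norm (v - (\<alpha> t / N) *\<^sub>R (G *v v))
      \<le> (1 - c * (real t + 1) powr (- \<tau>1)) * norm v) sequentially"
proof -
  define K_G where "K_G = onorm ((*v) G)"
  have "eventually (\<lambda>t::nat. ((a / N)\<^sup>2 * K_G\<^sup>2 / 2) * (real t + 1) powr (- 2 * \<tau>1)
      \<le> (a * lam / N - c) * (real t + 1) powr (- \<tau>1)) sequentially"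
    using c tau2_pos tau2_less by (intro eventually_powr_le_powr) auto
  then show ?thesis
  proof eventually_elim
    case (elim t)
    define q where "q = (real t + 1) powr (- \<tau>1)"
    have q2: "(real t + 1) powr (- 2 * \<tau>1) = q\<^sup>2"
      unfolding q_def power2_eq_square by (simp flip: powr_add)
    have "1 - (\<alpha> t / N) * lam + (\<alpha> t / N)\<^sup>2 * K_G\<^sup>2 / 2
        = 1 - (a * lam / N) * q + ((a / N)\<^sup>2 * K_G\<^sup>2 / 2) * q\<^sup>2"
      by (simp add: alpha_eq q_def power2_eq_square algebra_simps)
    also have "\<dots> \<le> 1 - c * q"
      using elim unfolding q2 q_def by (simp add: algebra_simps)
    finally have factor: "1 - (\<alpha> t / N) * lam + (\<alpha> t / N)\<^sup>2 * K_G\<^sup>2 / 2 \<le> 1 - c * q" .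
    show ?case
    proof
      fix v
      have "norm (v - (\<alpha> t / N) *\<^sub>R (G *v v))
          \<le> (1 - (\<alpha> t / N) * lam + (\<alpha> t / N)\<^sup>2 * K_G\<^sup>2 / 2) * norm v"
        using alpha_nonneg[of t] onorm[OF matrix_vector_mul_bounded_linear, of G v]
        by (intro norm_minus_scaleR_le G_coercive) (auto simp: K_G_def mult.commute)
      also have "\<dots> \<le> (1 - c * q) * norm v"
        using factor by (intro mult_right_mono) auto
      finally show "norm (v - (\<alpha> t / N) *\<^sub>R (G *v v)) \<le> (1 - c * (real t + 1) powr (- \<tau>1)) * norm v"
        by (simp add: q_def)
    qed
  qed
qed

lemma alpha_mult_powr: "\<alpha> t * (real t + 1) powr e = a * (real t + 1) powr (e - \<tau>1)"
  by (simp add: alpha_eq powr_add[symmetric])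

lemma beta_mult_powr: "\<beta> t * (real t + 1) powr e = b * (real t + 1) powr (e - \<tau>2)"
  by (simp add: beta_eq powr_add[symmetric])

lemma eventually_disagreement_Suc_bound:
  "eventually (\<lambda>t. disagreement (Suc t) \<le> (1 - \<kappa> * \<beta> t) * disagreement t
      + 2 * real N * K_A * \<alpha> t * (disagreement t + norm (mean t - \<theta>))
      + 2 * (\<alpha> t * (C * (real t + 1) powr \<gamma>) + \<beta> t * (N * (N * (real t + 1) powr (- \<rho>))))) sequentially"
  using eventually_disagreement_Suc_le noise_le
proof eventually_elim
  case (elim t)
  have "(\<Sum>i<N. norm (drift t i)) \<le> \<alpha> t * (N * K_A * (disagreement t + norm (mean t - \<theta>)) + noise_size t)
      + \<beta> t * (N * trigger_error t)"
    by (rule sum_norm_drift_le)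
  also have "\<dots> \<le> \<alpha> t * (N * K_A * (disagreement t + norm (mean t - \<theta>)) + C * (real t + 1) powr \<gamma>)
      + \<beta> t * (N * (N * (real t + 1) powr (- \<rho>)))"
    using elim(2) trigger_error_le[of t] alpha_nonneg[of t] beta_nonneg[of t] K_A_nonneg
    by (intro add_mono mult_left_mono) auto
  finally show ?case using elim(1) by (simp add: algebra_simps)
qed

lemma eventually_mean_minus_theta_Suc_bound:
  assumes "c < a * lam / N"
  shows "eventually (\<lambda>t. norm (mean (Suc t) - \<theta>)
      \<le> (1 - c * (real t + 1) powr (- \<tau>1)) * norm (mean t - \<theta>)
      + K_A * \<alpha> t * disagreement t
      + (\<alpha> t / N * (C * (real t + 1) powr \<gamma>) + \<beta> t * (N * (real t + 1) powr (- \<rho>)))) sequentially"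
  using eventually_gradient_step_le[OF assms] noise_le
proof eventually_elim
  case (elim t)
  have "\<alpha> t / N * noise_size t \<le> \<alpha> t / N * (C * (real t + 1) powr \<gamma>)"
    using elim(2) alpha_nonneg[of t] by (intro mult_left_mono) auto
  moreover have "\<beta> t * trigger_error t \<le> \<beta> t * (N * (real t + 1) powr (- \<rho>))"
    using trigger_error_le beta_nonneg by (rule mult_left_mono)
  ultimately show ?case
    using norm_mean_minus_theta_Suc_le[of t] spec[OF elim(1), of "mean t - \<theta>"]
    by (simp add: algebra_simps)
qed

lemma eventually_mean_minus_u_Suc_bound:
  assumes "c < a * lam / N"
  shows "eventually (\<lambda>t. norm (mean (Suc t) - u (Suc t))
      \<le> (1 - c * (real t + 1) powr (- \<tau>1)) * norm (mean t - u t)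
      + K_A * \<alpha> t * disagreement t + \<beta> t * (N * (real t + 1) powr (- \<rho>))) sequentially"
  using eventually_gradient_step_le[OF assms]
proof eventually_elim
  case (elim t)
  have "\<beta> t * trigger_error t \<le> \<beta> t * (N * (real t + 1) powr (- \<rho>))"
    using trigger_error_le beta_nonneg by (rule mult_left_mono)
  then show ?case
    using norm_mean_minus_u_Suc_le[of t] spec[OF elim, of "mean t - u t"]
    by (simp add: algebra_simps)
qed

text \<open>The disagreement and the error of the network average drive each other, so they are
  estimated together through the Lyapunov function disagreement t + \<mu> * norm (mean t - \<theta>).\<close>
lemma eventually_lyapunov_Suc_le:
  assumes c: "0 < c" "c < a * lam / N" and \<mu>: "0 < \<mu>" "2 * real N * K_A * a \<le> \<mu> * (c / 2)"
  shows "eventually (\<lambda>t. disagreement (Suc t) + \<mu> * norm (mean (Suc t) - \<theta>)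
      \<le> (1 - c / 2 * (real t + 1) powr (- \<tau>1)) * (disagreement t + \<mu> * norm (mean t - \<theta>))
        + ((2 + \<mu> / N) * C * a + (2 * real N * N + \<mu> * N) * b) * (real t + 1) powr (- (\<tau>1 - \<gamma>)))
     sequentially"
proof -
  have "eventually (\<lambda>t::nat. ((2 * real N + \<mu>) * K_A * a + c / 2) * (real t + 1) powr (- \<tau>1)
      \<le> (\<kappa> * b) * (real t + 1) powr (- \<tau>2)) sequentially"
    using tau2_less kappa_pos b_pos by (intro eventually_powr_le_powr) auto
  then have coef: "eventually (\<lambda>t. (2 * real N + \<mu>) * K_A * \<alpha> t + c * (real t + 1) powr (- \<tau>1) / 2
      \<le> \<kappa> * \<beta> t) sequentially"
    by eventually_elim (simp add: alpha_eq beta_eq algebra_simps)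
  show ?thesis
    using eventually_disagreement_Suc_bound eventually_mean_minus_theta_Suc_bound[OF c(2)] coef
  proof eventually_elim
    case (elim t)
    define p where "p = (real t + 1) powr (- (\<tau>1 - \<gamma>))"
    have "2 * real N * K_A * \<alpha> t \<le> \<mu> * (c * (real t + 1) powr (- \<tau>1) / 2)"
      using mult_right_mono[OF \<mu>(2), of "(real t + 1) powr (- \<tau>1)"] by (simp add: alpha_eq)
    from lyapunov_combination[OF elim(1,2) disagreement_nonneg norm_ge_zero less_imp_le[OF \<mu>(1)]
        elim(3) this]
    have "disagreement (Suc t) + \<mu> * norm (mean (Suc t) - \<theta>)
        \<le> (1 - c / 2 * (real t + 1) powr (- \<tau>1)) * (disagreement t + \<mu> * norm (mean t - \<theta>))
          + ((2 + \<mu> / N) * C * (\<alpha> t * (real t + 1) powr \<gamma>)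
             + (2 * real N * N + \<mu> * N) * (\<beta> t * (real t + 1) powr (- \<rho>)))"
      using N_pos by (simp add: field_simps)
    moreover have "(2 + \<mu> / N) * C * (\<alpha> t * (real t + 1) powr \<gamma>)
        + (2 * real N * N + \<mu> * N) * (\<beta> t * (real t + 1) powr (- \<rho>))
        \<le> ((2 + \<mu> / N) * C * a + (2 * real N * N + \<mu> * N) * b) * p"
    proof -
      have "\<beta> t * (real t + 1) powr (- \<rho>) \<le> b * p"
        unfolding beta_mult_powr p_def using b_pos rho_gt gamma_nonneg
        by (intro mult_left_mono powr_mono) auto
      then have "(2 * real N * N + \<mu> * N) * (\<beta> t * (real t + 1) powr (- \<rho>))
          \<le> (2 * real N * N + \<mu> * N) * (b * p)"
        using \<mu>(1) by (intro mult_left_mono) auto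
      moreover have "\<alpha> t * (real t + 1) powr \<gamma> = a * p" by (simp add: alpha_mult_powr p_def)
      ultimately show ?thesis by (simp add: algebra_simps)
    qed
    ultimately show ?case by (simp add: p_def)
  qed
qed

text \<open>This only yields polynomial growth of the error of the average, which is all the finer
  estimates below need.\<close>
lemma mean_minus_theta_growth:
  "\<exists>B\<ge>0. eventually (\<lambda>t. norm (mean t - \<theta>) \<le> B * (real t + 1) powr \<gamma>) sequentially"
proof -
  define c where "c = a * lam / N / 2"
  have "0 < a * lam / N" using a_pos lam_pos N_pos by simp
  then have c: "0 < c" "c < a * lam / N" by (auto simp: c_def)
  define \<mu> where "\<mu> = 4 * real N * a * K_A / c + 1"
  have "0 \<le> 4 * real N * a * K_A / c" using c K_A_nonneg a_pos by simp
  moreover have "\<mu> * (c / 2) = 2 * real N * K_A * a + c / 2" using c by (simp add: \<mu>_def field_simps)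
  ultimately have \<mu>: "0 < \<mu>" "2 * real N * K_A * a \<le> \<mu> * (c / 2)"
    using c by (auto simp: \<mu>_def)
  define \<Phi> where "\<Phi> t = disagreement t + \<mu> * norm (mean t - \<theta>)" for t
  have "\<exists>B\<ge>0. eventually (\<lambda>t. \<Phi> t \<le> B * (real t + 1) powr (- (- \<gamma>))) sequentially"
  proof (rule chung_powr_bound)
    show "0 < \<tau>1" "\<tau>1 \<le> 1" "0 < c / 2" "\<tau>1 = 1 \<Longrightarrow> - \<gamma> < c / 2"
      using tau2_pos tau2_less tau1_le c gamma_nonneg by auto
    show "eventually (\<lambda>t. \<Phi> (Suc t) \<le> (1 - c / 2 * (real t + 1) powr (- \<tau>1)) * \<Phi> t
        + ((2 + \<mu> / N) * C * a + (2 * real N * N + \<mu> * N) * b) * (real t + 1) powr (- (\<tau>1 + - \<gamma>)))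
        sequentially"
      using eventually_lyapunov_Suc_le[OF c \<mu>] by (simp add: \<Phi>_def)
  qed
  then obtain B where B: "0 \<le> B" "eventually (\<lambda>t. \<Phi> t \<le> B * (real t + 1) powr \<gamma>) sequentially"
    by auto
  have "eventually (\<lambda>t. norm (mean t - \<theta>) \<le> B / \<mu> * (real t + 1) powr \<gamma>) sequentially"
    using B(2)
  proof eventually_elim
    case (elim t)
    then have "\<mu> * norm (mean t - \<theta>) \<le> B * (real t + 1) powr \<gamma>"
      using disagreement_nonneg[of t] by (simp add: \<Phi>_def)
    then show ?case using \<mu>(1) by (simp add: field_simps)
  qed
  then show ?thesis using B(1) \<mu>(1) by (intro exI[of _ "B / \<mu>"]) auto
qed

lemma eventually_disagreement_Suc_le_decay:
  assumes B1: "0 \<le> B1" "eventually (\<lambda>t. norm (mean t - \<theta>) \<le> B1 * (real t + 1) powr \<gamma>) sequentially"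
  shows "eventually (\<lambda>t. disagreement (Suc t)
      \<le> (1 - \<kappa> / 2 * b * (real t + 1) powr (- \<tau>2)) * disagreement t
      + ((2 * real N * K_A * B1 + 2 * C) * a + 2 * real N * N * b)
        * (real t + 1) powr (- (\<tau>2 + min (\<tau>1 - \<tau>2 - \<gamma>) \<rho>))) sequentially"
proof -
  have "eventually (\<lambda>t::nat. (2 * real N * K_A * a) * (real t + 1) powr (- \<tau>1)
      \<le> (\<kappa> / 2 * b) * (real t + 1) powr (- \<tau>2)) sequentially"
    using tau2_less kappa_pos b_pos by (intro eventually_powr_le_powr) auto
  then have small: "eventually (\<lambda>t. 2 * real N * K_A * \<alpha> t \<le> \<kappa> / 2 * \<beta> t) sequentially"
    by eventually_elim (simp add: alpha_eq beta_eq algebra_simps)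
  show ?thesis
    using eventually_disagreement_Suc_bound B1(2) small
  proof eventually_elim
    case (elim t)
    define Z g e p where "Z = disagreement t" and "g = (real t + 1) powr \<gamma>"
      and "e = (real t + 1) powr (- \<rho>)" and "p = (real t + 1) powr (- (\<tau>2 + min (\<tau>1 - \<tau>2 - \<gamma>) \<rho>))"
    have "2 * real N * K_A * \<alpha> t * Z \<le> \<kappa> / 2 * \<beta> t * Z"
      using mult_right_mono[OF elim(3) disagreement_nonneg[of t]] by (simp add: Z_def)
    moreover have "2 * real N * K_A * \<alpha> t * norm (mean t - \<theta>) \<le> 2 * real N * K_A * \<alpha> t * (B1 * g)"
      using K_A_nonneg alpha_nonneg[of t] unfolding g_def
      by (intro mult_left_mono[OF elim(2)]) simp
    moreover have "\<alpha> t * g \<le> a * p"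
      unfolding alpha_mult_powr g_def p_def using a_pos by (intro mult_left_mono powr_mono) auto
    moreover have "\<beta> t * e \<le> b * p"
      unfolding beta_mult_powr e_def p_def using b_pos by (intro mult_left_mono powr_mono) auto
    ultimately have "disagreement (Suc t) \<le> (1 - \<kappa> / 2 * \<beta> t) * Z
        + (2 * real N * K_A * B1 + 2 * C) * (a * p) + 2 * real N * N * (b * p)"
      using elim(1) B1(1) K_A_nonneg C_nonneg
        mult_left_mono[of "\<alpha> t * g" "a * p" "2 * real N * K_A * B1 + 2 * C"]
        mult_left_mono[of "\<beta> t * e" "b * p" "2 * real N * N"]
      unfolding Z_def g_def e_def by (simp add: algebra_simps)
    then show ?case by (simp add: Z_def p_def beta_eq algebra_simps)
  qed
qed

lemma disagreement_decay:
  "\<exists>B\<ge>0. eventually (\<lambda>t. disagreement t \<le> B * (real t + 1) powr (- min (\<tau>1 - \<tau>2 - \<gamma>) \<rho>))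
     sequentially"
proof -
  obtain B1 where "0 \<le> B1"
    "eventually (\<lambda>t. norm (mean t - \<theta>) \<le> B1 * (real t + 1) powr \<gamma>) sequentially"
    using mean_minus_theta_growth by blast
  from chung_powr_bound[OF _ _ _ _ eventually_disagreement_Suc_le_decay[OF this]] show ?thesis
    using tau2_pos tau2_less tau1_le kappa_pos b_pos by auto
qed

lemma eventually_mean_minus_u_Suc_le_decay:
  assumes c: "c < a * lam / N" and r: "r \<le> min (\<tau>1 - \<tau>2 - \<gamma>) \<rho>" "r \<le> \<rho> + \<tau>2 - \<tau>1"
    and B2: "0 \<le> B2" "eventually (\<lambda>t. disagreement t
      \<le> B2 * (real t + 1) powr (- min (\<tau>1 - \<tau>2 - \<gamma>) \<rho>)) sequentially"
  shows "eventually (\<lambda>t. norm (mean (Suc t) - u (Suc t)) \<le> (1 - c * (real t + 1) powr (- \<tau>1))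
      * norm (mean t - u t) + (K_A * a * B2 + b * N) * (real t + 1) powr (- (\<tau>1 + r))) sequentially"
  using eventually_mean_minus_u_Suc_bound[OF c] B2(2)
proof eventually_elim
  case (elim t)
  define p where "p = (real t + 1) powr (- (\<tau>1 + r))"
  have "K_A * \<alpha> t * disagreement t \<le> K_A * B2 * (\<alpha> t * (real t + 1) powr (- min (\<tau>1 - \<tau>2 - \<gamma>) \<rho>))"
    using mult_left_mono[OF elim(2), of "K_A * \<alpha> t"] K_A_nonneg alpha_nonneg[of t]
    by (simp add: algebra_simps)
  also have "\<dots> \<le> K_A * B2 * (a * p)"
    unfolding alpha_mult_powr p_def using r(1) K_A_nonneg B2(1) a_pos
    by (intro mult_left_mono powr_mono) auto
  finally have "K_A * \<alpha> t * disagreement t \<le> K_A * B2 * (a * p)" .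
  moreover have "\<beta> t * (real t + 1) powr (- \<rho>) \<le> b * p"
    unfolding beta_mult_powr p_def using r(2) b_pos by (intro mult_left_mono powr_mono) auto
  ultimately show ?case
    using elim(1) mult_left_mono[of "\<beta> t * (real t + 1) powr (- \<rho>)" "b * p" N]
    by (simp add: p_def algebra_simps)
qed

lemma mean_minus_u_decay:
  assumes r: "r \<le> \<tau>1 - \<tau>2 - \<gamma>" "r \<le> \<rho> + \<tau>2 - \<tau>1" and r_one: "\<tau>1 = 1 \<Longrightarrow> r < a * lam / N"
  shows "\<exists>B\<ge>0. eventually (\<lambda>t. norm (mean t - u t) \<le> B * (real t + 1) powr (- r)) sequentially"
proof -
  define L where "L = a * lam / N"
  have L: "0 < L" using a_pos lam_pos N_pos by (simp add: L_def)
  obtain c where c: "0 < c" "c < L" "\<tau>1 = 1 \<Longrightarrow> r < c"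
  proof (cases "\<tau>1 = 1")
    case True
    then have "max r 0 < L" using r_one L by (simp add: L_def)
    then show ?thesis using True L by (intro that[of "(max r 0 + L) / 2"]) auto
  next
    case False
    then show ?thesis using L by (intro that[of "L / 2"]) auto
  qed
  obtain B2 where "0 \<le> B2" "eventually (\<lambda>t. disagreement t
      \<le> B2 * (real t + 1) powr (- min (\<tau>1 - \<tau>2 - \<gamma>) \<rho>)) sequentially"
    using disagreement_decay by blast
  moreover have "r \<le> min (\<tau>1 - \<tau>2 - \<gamma>) \<rho>" using r tau2_less by simp
  ultimately have "eventually (\<lambda>t. norm (mean (Suc t) - u (Suc t)) \<le> (1 - c * (real t + 1) powr (- \<tau>1))
      * norm (mean t - u t) + (K_A * a * B2 + b * N) * (real t + 1) powr (- (\<tau>1 + r))) sequentially"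
    using c(2) r(2) unfolding L_def by (intro eventually_mean_minus_u_Suc_le_decay)
  from chung_powr_bound[OF _ _ _ _ this] show ?thesis
    using tau2_pos tau2_less tau1_le c by auto
qed

lemma estimate_gap_rate:
  assumes "\<tau>0 < \<tau>1 - \<tau>2 - \<gamma>" "\<tau>0 < \<rho> + \<tau>2 - \<tau>1" "\<tau>1 = 1 \<Longrightarrow> \<tau>0 < a * lam / N" and i: "i < N"
  shows "(\<lambda>t. (real t + 1) powr \<tau>0 * norm (x t i - u t)) \<longlonglongrightarrow> 0"
proof -
  define m where "m = min (\<tau>1 - \<tau>2 - \<gamma>) (\<rho> + \<tau>2 - \<tau>1)"
  have "\<tau>0 < (if \<tau>1 = 1 then min m (a * lam / N) else m)"
    using assms by (auto simp: m_def)
  then obtain r where r: "\<tau>0 < r" "r < (if \<tau>1 = 1 then min m (a * lam / N) else m)"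
    using dense by blast
  then have r_le: "r \<le> \<tau>1 - \<tau>2 - \<gamma>" "r \<le> \<rho> + \<tau>2 - \<tau>1" "\<tau>1 = 1 \<Longrightarrow> r < a * lam / N"
    unfolding m_def by (auto split: if_splits)
  obtain B2 where B2: "0 \<le> B2" "eventually (\<lambda>t. disagreement t
      \<le> B2 * (real t + 1) powr (- min (\<tau>1 - \<tau>2 - \<gamma>) \<rho>)) sequentially"
    using disagreement_decay by blast
  obtain B3 where B3: "0 \<le> B3"
    "eventually (\<lambda>t. norm (mean t - u t) \<le> B3 * (real t + 1) powr (- r)) sequentially"
    using mean_minus_u_decay[OF r_le] by blast
  have "eventually (\<lambda>t. norm ((real t + 1) powr \<tau>0 * norm (x t i - u t))
      \<le> (B2 + B3) * (real t + 1) powr (\<tau>0 - r)) sequentially"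
    using B2(2) B3(2)
  proof eventually_elim
    case (elim t)
    have "(real t + 1) powr (- min (\<tau>1 - \<tau>2 - \<gamma>) \<rho>) \<le> (real t + 1) powr (- r)"
      using r_le tau2_less by (intro powr_mono) auto
    then have "disagreement t \<le> B2 * (real t + 1) powr (- r)"
      using order.trans[OF elim(1) mult_left_mono[OF _ B2(1)]] by blast
    then have "norm (x t i - u t) \<le> (B2 + B3) * (real t + 1) powr (- r)"
      using norm_triangle_ineq[of "x t i - mean t" "mean t - u t"] norm_dev_le[OF i, of t] elim(2)
      by (simp add: distrib_right)
    then have "norm ((real t + 1) powr \<tau>0 * norm (x t i - u t))
        \<le> (real t + 1) powr \<tau>0 * ((B2 + B3) * (real t + 1) powr (- r))"
      by (simp add: mult_left_mono)
    also have "\<dots> = (B2 + B3) * ((real t + 1) powr \<tau>0 * (real t + 1) powr (- r))"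
      by (simp only: mult_ac)
    also have "\<dots> = (B2 + B3) * (real t + 1) powr (\<tau>0 - r)"
      by (simp add: powr_add[symmetric])
    finally show ?case .
  qed
  moreover have "(\<lambda>t. (B2 + B3) * (real t + 1) powr (\<tau>0 - r)) \<longlonglongrightarrow> 0"
    using tendsto_mult_left[OF tendsto_powr_neg_exponent, of "\<tau>0 - r" "B2 + B3"] r(1) by simp
  ultimately show ?thesis by (rule Lim_null_comparison)
qed

end

section \<open>Almost sure growth of the noise\<close>

lemma AE_eventually_le_powr:
  fixes X :: "nat \<Rightarrow> 'a \<Rightarrow> real"
  assumes "prob_space M"
    and meas: "\<And>t. X t \<in> borel_measurable M"
    and ident: "\<And>t. distr M borel (X t) = distr M borel (X 0)"
    and moment: "integrable M (\<lambda>\<omega>. X 0 \<omega> powr p)"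
    and p: "0 < p" and \<gamma>: "1 < \<gamma> * p"
  shows "AE \<omega> in M. eventually (\<lambda>t. X t \<omega> \<le> (real t + 1) powr \<gamma>) sequentially"
proof -
  interpret prob_space M by fact
  define E where "E t = {\<omega> \<in> space M. (real t + 1) powr \<gamma> < X t \<omega>}" for t
  have E_sets: "E t \<in> sets M" for t
    unfolding E_def using meas[of t] by measurable
  have bound: "prob (E t) \<le> (\<integral>\<omega>. X 0 \<omega> powr p \<partial>M) * (real t + 1) powr (- (\<gamma> * p))" for t
  proof -
    define c where "c = (real t + 1) powr \<gamma>"
    have c: "0 < c" by (simp add: c_def)
    have ray: "{c<..} \<in> sets borel" by simp
    have preimage: "X s -` {c<..} \<inter> space M = {\<omega> \<in> space M. c < X s \<omega>}" for s by auto
    have "prob (E t) = measure (distr M borel (X t)) {c<..}"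
      unfolding measure_distr[OF meas ray] preimage by (simp add: E_def c_def)
    also have "\<dots> = measure (distr M borel (X 0)) {c<..}"
      by (simp only: ident[of t])
    also have "\<dots> = prob {\<omega> \<in> space M. c < X 0 \<omega>}"
      unfolding measure_distr[OF meas ray] preimage ..
    also have "\<dots> \<le> prob {\<omega> \<in> space M. c powr p \<le> X 0 \<omega> powr p}"
    proof (rule finite_measure_mono)
      show "{\<omega> \<in> space M. c < X 0 \<omega>} \<subseteq> {\<omega> \<in> space M. c powr p \<le> X 0 \<omega> powr p}"
        using c p by (auto intro!: powr_mono2)
      show "{\<omega> \<in> space M. c powr p \<le> X 0 \<omega> powr p} \<in> sets M"
        using meas[of 0] by measurable
    qed
    also have "\<dots> \<le> (\<integral>\<omega>. X 0 \<omega> powr p \<partial>M) / c powr p"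
      using c by (intro integral_Markov_inequality_measure[OF moment sets.top]) auto
    also have "c powr p = (real t + 1) powr (\<gamma> * p)"
      by (simp add: c_def powr_powr)
    finally show ?thesis by (simp add: powr_minus divide_inverse)
  qed
  have summ: "summable (\<lambda>t. (\<integral>\<omega>. X 0 \<omega> powr p \<partial>M) * (real t + 1) powr (- (\<gamma> * p)))"
  proof -
    have "summable (\<lambda>t. real t powr (- (\<gamma> * p)))"
      using \<gamma> by (simp add: summable_real_powr_iff)
    then have "summable (\<lambda>t. real (Suc t) powr (- (\<gamma> * p)))"
      by (rule summable_Suc_iff[THEN iffD2])
    then show ?thesis by (intro summable_mult) (simp add: add.commute)
  qed
  have "summable (\<lambda>t. prob (E t))"
    using summable_comparison_test'[OF summ, of 0 "\<lambda>t. prob (E t)"] bound by simp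
  then have "AE \<omega> in M. eventually (\<lambda>t. \<omega> \<in> space M - E t) sequentially"
    by (intro borel_cantelli_AE1 E_sets) (simp_all add: emeasure_eq_measure)
  then show ?thesis
  proof (rule AE_mp[OF _ AE_I2], intro impI)
    fix \<omega> assume "\<omega> \<in> space M" and ev: "eventually (\<lambda>t. \<omega> \<in> space M - E t) sequentially"
    from ev show "eventually (\<lambda>t. X t \<omega> \<le> (real t + 1) powr \<gamma>) sequentially"
      by (rule eventually_mono) (use \<open>\<omega> \<in> space M\<close> in \<open>auto simp: E_def\<close>)
  qed
qed

section \<open>The event-triggered estimator\<close>

definition gram_block :: "(nat \<Rightarrow> nat \<Rightarrow> 'n::finite \<Rightarrow> real) \<Rightarrow> (nat \<Rightarrow> nat) \<Rightarrow> nat \<Rightarrow> real^'n^'n" where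
  "gram_block H m i = (\<chi> j k. \<Sum>l<m i. H i l j * H i l k)"

lemma gram_block_mult: "gram_block H m i *v y = HTmul H m i (Hmul H i y)"
proof -
  have "(\<Sum>k\<in>UNIV. (\<Sum>l<m i. H i l j * H i l k) * y $ k) = (\<Sum>l<m i. H i l j * (\<Sum>k\<in>UNIV. H i l k * y $ k))"
    for j
  proof -
    have "(\<Sum>k\<in>UNIV. (\<Sum>l<m i. H i l j * H i l k) * y $ k)
        = (\<Sum>k\<in>UNIV. \<Sum>l<m i. H i l j * (H i l k * y $ k))"
      by (simp add: sum_distrib_right mult.assoc)
    also have "\<dots> = (\<Sum>l<m i. \<Sum>k\<in>UNIV. H i l j * (H i l k * y $ k))"
      by (rule sum.swap)
    finally show ?thesis by (simp add: sum_distrib_left)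
  qed
  then show ?thesis
    by (simp add: vec_eq_iff matrix_vector_mult_def gram_block_def HTmul_def Hmul_def)
qed

lemma gram_eq_sum: "gram N H m = (\<Sum>i<N. gram_block H m i)"
  by (simp add: vec_eq_iff gram_def gram_block_def)

lemma HTmul_add: "HTmul H m i (\<lambda>l. y l + z l) = HTmul H m i y + HTmul H m i z"
  by (simp add: vec_eq_iff HTmul_def distrib_left sum.distrib)

lemma Hmul_diff: "Hmul H i (x - y) l = Hmul H i x l - Hmul H i y l"
  by (simp add: Hmul_def algebra_simps sum_subtractf)

lemma innov_eq: "innov H m v \<theta> i t \<omega> z = gram_block H m i *v (\<theta> - z) + HTmul H m i (v i t \<omega>)"
proof -
  have "innov H m v \<theta> i t \<omega> z = HTmul H m i (\<lambda>l. Hmul H i (\<theta> - z) l + v i t \<omega> l)"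
    by (simp add: innov_def meas_def Hmul_diff algebra_simps)
  then show ?thesis by (simp add: HTmul_add gram_block_mult)
qed

lemma inner_gram_mult: "y \<bullet> (gram N H m *v y) = (\<Sum>i<N. \<Sum>l<m i. (Hmul H i y l)\<^sup>2)"
proof -
  have "y \<bullet> HTmul H m i (Hmul H i y) = (\<Sum>l<m i. (Hmul H i y l)\<^sup>2)" for i
  proof -
    have "y \<bullet> HTmul H m i (Hmul H i y) = (\<Sum>j\<in>UNIV. \<Sum>l<m i. H i l j * y $ j * Hmul H i y l)"
      by (simp add: inner_vec_def HTmul_def sum_distrib_left mult_ac)
    also have "\<dots> = (\<Sum>l<m i. \<Sum>j\<in>UNIV. H i l j * y $ j * Hmul H i y l)"
      by (rule sum.swap)
    also have "\<dots> = (\<Sum>l<m i. (Hmul H i y l)\<^sup>2)"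
      by (simp add: Hmul_def sum_distrib_right power2_eq_square)
    finally show ?thesis .
  qed
  then show ?thesis
    by (simp add: gram_eq_sum matrix_vector_mult_sum_left gram_block_mult inner_sum_right)
qed

lemma transpose_gram: "transpose (gram N H m) = gram N H m"
  by (simp add: vec_eq_iff transpose_def gram_def mult.commute)

lemma gram_pos_definite:
  assumes "rank (gram N H m) = CARD('n)" and "x \<noteq> 0"
  shows "0 < x \<bullet> (gram N H m *v (x::real^'n))"
proof (rule ccontr)
  assume "\<not> 0 < x \<bullet> (gram N H m *v x)"
  then have "(\<Sum>i<N. \<Sum>l<m i. (Hmul H i x l)\<^sup>2) = 0"
    unfolding inner_gram_mult by (simp add: sum_nonneg leD order.antisym)
  then have "Hmul H i x l = 0" if "i < N" "l < m i" for i l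
    using that by (simp add: sum_nonneg_eq_0_iff sum_nonneg)
  then have "gram N H m *v x = 0"
    by (simp add: gram_eq_sum matrix_vector_mult_sum_left gram_block_mult HTmul_def vec_eq_iff)
  then have "x = 0"
    using full_rank_injective[THEN iffD1, OF assms(1)] by (metis injD matrix_vector_mult_0_right)
  then show False using assms(2) by simp
qed

lemma abs_noise_le_noise_norm:
  assumes "i < N" "l < m i"
  shows "\<bar>v i t \<omega> l\<bar> \<le> noise_norm N m v t \<omega>"
proof -
  have "(v i t \<omega> l)\<^sup>2 \<le> (\<Sum>l'<m i. (v i t \<omega> l')\<^sup>2)"
    using assms by (intro member_le_sum) auto
  also have "\<dots> \<le> (\<Sum>i'<N. \<Sum>l'<m i'. (v i' t \<omega> l')\<^sup>2)"
    using assms by (intro member_le_sum[of i "{..<N}" "\<lambda>i'. \<Sum>l'<m i'. (v i' t \<omega> l')\<^sup>2"] sum_nonneg) auto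
  finally have "sqrt ((v i t \<omega> l)\<^sup>2) \<le> noise_norm N m v t \<omega>"
    unfolding noise_norm_def by (rule real_sqrt_le_mono)
  then show ?thesis by simp
qed

lemma norm_HTmul_le:
  assumes "\<And>l. l < m i \<Longrightarrow> \<bar>y l\<bar> \<le> B"
  shows "norm (HTmul H m i y) \<le> (\<Sum>j\<in>UNIV. \<Sum>l<m i. \<bar>H i l j\<bar>) * B"
proof -
  have "norm (HTmul H m i y) \<le> (\<Sum>j\<in>UNIV. \<bar>HTmul H m i y $ j\<bar>)"
    by (rule norm_le_l1_cart)
  also have "\<dots> \<le> (\<Sum>j\<in>UNIV. \<Sum>l<m i. \<bar>H i l j\<bar> * B)"
  proof (rule sum_mono)
    fix j
    have "\<bar>HTmul H m i y $ j\<bar> \<le> (\<Sum>l<m i. \<bar>H i l j * y l\<bar>)"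
      unfolding HTmul_def by (simp add: sum_abs)
    also have "\<dots> \<le> (\<Sum>l<m i. \<bar>H i l j\<bar> * B)"
      using assms by (intro sum_mono) (simp add: abs_mult mult_left_mono)
    finally show "\<bar>HTmul H m i y $ j\<bar> \<le> (\<Sum>l<m i. \<bar>H i l j\<bar> * B)" .
  qed
  finally show ?thesis by (simp add: sum_distrib_right)
qed

lemma sum_norm_HTmul_le_noise_norm:
  "(\<Sum>i<N. norm (HTmul H m i (v i t \<omega>)))
     \<le> (\<Sum>i<N. \<Sum>j\<in>UNIV. \<Sum>l<m i. \<bar>H i l j\<bar>) * noise_norm N m v t \<omega>"
proof -
  have "(\<Sum>i<N. norm (HTmul H m i (v i t \<omega>)))
      \<le> (\<Sum>i<N. (\<Sum>j\<in>UNIV. \<Sum>l<m i. \<bar>H i l j\<bar>) * noise_norm N m v t \<omega>)"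
    by (intro sum_mono norm_HTmul_le abs_noise_le_noise_norm) auto
  then show ?thesis by (simp add: sum_distrib_right)
qed

lemma et_state_Suc_fst:
  "fst (et_state N adj H m v \<theta> \<alpha> \<beta> \<rho> x0 \<omega> (Suc t)) i
     = fst (et_state N adj H m v \<theta> \<alpha> \<beta> \<rho> x0 \<omega> t) i
       + \<alpha> t *\<^sub>R (gram_block H m i *v (\<theta> - fst (et_state N adj H m v \<theta> \<alpha> \<beta> \<rho> x0 \<omega> t) i)
                  + HTmul H m i (v i t \<omega>))
       + \<beta> t *\<^sub>R (\<Sum>j\<in>neighbours N adj i. snd (et_state N adj H m v \<theta> \<alpha> \<beta> \<rho> x0 \<omega> t) j
                                       - fst (et_state N adj H m v \<theta> \<alpha> \<beta> \<rho> x0 \<omega> t) i)"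
  by (simp add: Let_def innov_eq neighbours_def)

text \<open>At time t + 1 the threshold is 1 / (t + 2)^\<rho>_j: an agent that does not broadcast stays
  within it, and one that broadcasts has no error at all.\<close>
lemma et_state_trigger_le:
  "norm (snd (et_state N adj H m v \<theta> \<alpha> \<beta> \<rho> x0 \<omega> t) j - fst (et_state N adj H m v \<theta> \<alpha> \<beta> \<rho> x0 \<omega> t) j)
     \<le> (real t + 1) powr (- \<rho> j)"
proof (cases t)
  case (Suc s)
  have "1 / (real (Suc s) + 1) powr \<rho> j = (real t + 1) powr (- \<rho> j)"
    by (simp add: Suc powr_minus divide_inverse)
  then show ?thesis
    by (simp add: Suc Let_def norm_minus_commute not_less)
qed simp

lemma cent_est_Suc_expand:
  "cent_est N H m v \<theta> \<alpha>c u0 \<omega> (Suc t) = cent_est N H m v \<theta> \<alpha>c u0 \<omega> t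
     + (\<alpha>c t / N) *\<^sub>R (\<Sum>i<N. gram_block H m i *v (\<theta> - cent_est N H m v \<theta> \<alpha>c u0 \<omega> t)
                              + HTmul H m i (v i t \<omega>))"
  by (simp add: innov_eq)

lemma consensus_recursion_event_triggered:
  assumes "0 < N" "undirected_simple N adj" "\<And>t. 0 \<le> \<alpha> t" "\<And>t. 0 \<le> \<beta> t"
  shows "consensus_recursion N adj (gram_block H m) \<theta> \<alpha> \<beta>
     (\<lambda>t. fst (et_state N adj H m v \<theta> \<alpha> \<beta> \<rho> x0 \<omega> t))
     (\<lambda>t. snd (et_state N adj H m v \<theta> \<alpha> \<beta> \<rho> x0 \<omega> t))
     (\<lambda>t i. HTmul H m i (v i t \<omega>)) (cent_est N H m v \<theta> \<alpha> u0 \<omega>)"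
  using assms by unfold_locales
    (simp_all add: undirected_simple_def et_state_Suc_fst cent_est_Suc_expand
      del: et_state.simps cent_est.simps)

lemma consensus_recursion_rates_event_triggered:
  fixes N :: nat and m :: "nat \<Rightarrow> nat" and H :: "nat \<Rightarrow> nat \<Rightarrow> 'n::finite \<Rightarrow> real"
    and \<theta> :: "real^'n" and v :: "nat \<Rightarrow> nat \<Rightarrow> 'a \<Rightarrow> nat \<Rightarrow> real"
    and \<rho> :: "nat \<Rightarrow> real" and x0 :: "nat \<Rightarrow> real^'n" and u0 :: "real^'n"
    and a b \<tau>1 \<tau>2 \<rho>0 \<gamma> :: real
  defines "\<alpha> \<equiv> \<lambda>t. a / (real t + 1) powr \<tau>1" and "\<beta> \<equiv> \<lambda>t. b / (real t + 1) powr \<tau>2"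
  assumes N_pos: "0 < N" and graph: "undirected_simple N adj" and conn: "graph_connected N adj"
    and full_rank: "rank (gram N H m) = CARD('n)"
    and ab: "0 < a" "0 < b" and taus: "0 < \<tau>2" "\<tau>2 < \<tau>1" "\<tau>1 \<le> 1"
    and rho0: "\<forall>j<N. \<rho>0 \<le> \<rho> j" "\<tau>1 - \<tau>2 < \<rho>0" and gamma: "0 \<le> \<gamma>"
    and noise: "eventually (\<lambda>t. noise_norm N m v t \<omega> \<le> (real t + 1) powr \<gamma>) sequentially"
  obtains \<kappa> where "consensus_recursion_rates N adj (gram_block H m) \<theta> \<alpha> \<beta>
      (\<lambda>t. fst (et_state N adj H m v \<theta> \<alpha> \<beta> \<rho> x0 \<omega> t))
     (\<lambda>t. snd (et_state N adj H m v \<theta> \<alpha> \<beta> \<rho> x0 \<omega> t))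
      (\<lambda>t i. HTmul H m i (v i t \<omega>)) (cent_est N H m v \<theta> \<alpha> u0 \<omega>)
      \<kappa> (lambda_min (gram N H m)) a b \<tau>1 \<tau>2 \<rho>0 \<gamma> (\<Sum>i<N. \<Sum>j\<in>UNIV. \<Sum>l<m i. \<bar>H i l j\<bar>)"
proof -
  have sym: "\<forall>i<N. \<forall>j<N. adj i j = adj j i"
    using graph by (simp add: undirected_simple_def)
  obtain \<kappa> where \<kappa>: "0 < \<kappa>" "\<And>(z::nat \<Rightarrow> real^'n) (c::real). 0 \<le> c \<Longrightarrow> c * N \<le> 1 / 2 \<Longrightarrow>
      (\<Sum>i<N. z i) = 0 \<Longrightarrow>
      L2_set (\<lambda>i. norm (z i + c *\<^sub>R (\<Sum>j\<in>neighbours N adj i. z j - z i))) {..<N}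
        \<le> (1 - \<kappa> * c) * L2_set (\<lambda>i. norm (z i)) {..<N}"
    using laplacian_step_contracts[OF sym conn N_pos] by blast
  have lam: "0 < lambda_min (gram N H m)"
    "\<And>y. lambda_min (gram N H m) * (norm y)\<^sup>2 \<le> y \<bullet> ((\<Sum>i<N. gram_block H m i) *v y)"
    using lambda_min_pos_definite[OF transpose_gram gram_pos_definite[OF full_rank]]
    by (simp_all add: gram_eq_sum)
  have base: "consensus_recursion N adj (gram_block H m) \<theta> \<alpha> \<beta>
      (\<lambda>t. fst (et_state N adj H m v \<theta> \<alpha> \<beta> \<rho> x0 \<omega> t))
     (\<lambda>t. snd (et_state N adj H m v \<theta> \<alpha> \<beta> \<rho> x0 \<omega> t))
      (\<lambda>t i. HTmul H m i (v i t \<omega>)) (cent_est N H m v \<theta> \<alpha> u0 \<omega>)"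
    using N_pos graph ab by (intro consensus_recursion_event_triggered) (auto simp: \<alpha>_def \<beta>_def)
  show ?thesis
  proof (rule that, rule consensus_recursion_rates.intro[OF base], unfold_locales)
    show "0 < \<kappa>" by (fact \<kappa>(1))
    show "\<And>(z :: nat \<Rightarrow> real^'n) (c::real). 0 \<le> c \<Longrightarrow> c * N \<le> 1 / 2 \<Longrightarrow> (\<Sum>i<N. z i) = 0 \<Longrightarrow>
        L2_set (\<lambda>i. norm (z i + c *\<^sub>R (\<Sum>j\<in>neighbours N adj i. z j - z i))) {..<N}
          \<le> (1 - \<kappa> * c) * L2_set (\<lambda>i. norm (z i)) {..<N}"
      by (fact \<kappa>(2))
    show "lambda_min (gram N H m) * (norm y)\<^sup>2
        \<le> y \<bullet> (consensus_recursion.G N (gram_block H m) *v y)" for y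
      using lam(2) by (simp add: consensus_recursion.G_def[OF base])
    show "\<alpha> t = a * (real t + 1) powr (- \<tau>1)" "\<beta> t = b * (real t + 1) powr (- \<tau>2)" for t
      by (simp_all add: \<alpha>_def \<beta>_def powr_minus divide_inverse)
    show "0 \<le> (\<Sum>i<N. \<Sum>j\<in>UNIV. \<Sum>l<m i. \<bar>H i l j\<bar>)" by (intro sum_nonneg) auto
    show "norm (snd (et_state N adj H m v \<theta> \<alpha> \<beta> \<rho> x0 \<omega> t) j
        - fst (et_state N adj H m v \<theta> \<alpha> \<beta> \<rho> x0 \<omega> t) j)
        \<le> (real t + 1) powr (- \<rho>0)" if "j < N" for t j
    proof -
      have "(real t + 1) powr (- \<rho> j) \<le> (real t + 1) powr (- \<rho>0)"
        using rho0(1) that by (intro powr_mono) auto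
      with et_state_trigger_le show ?thesis by (rule order.trans)
    qed
    show "eventually (\<lambda>t. consensus_recursion.noise_size N (\<lambda>t i. HTmul H m i (v i t \<omega>)) t
        \<le> (\<Sum>i<N. \<Sum>j\<in>UNIV. \<Sum>l<m i. \<bar>H i l j\<bar>) * (real t + 1) powr \<gamma>) sequentially"
      using noise unfolding consensus_recursion.noise_size_def[OF base]
    proof eventually_elim
      case (elim t)
      have "0 \<le> (\<Sum>i<N. \<Sum>j\<in>UNIV. \<Sum>l<m i. \<bar>H i l j\<bar>)" by (intro sum_nonneg) auto
      with elim have "(\<Sum>i<N. \<Sum>j\<in>UNIV. \<Sum>l<m i. \<bar>H i l j\<bar>) * noise_norm N m v t \<omega>
          \<le> (\<Sum>i<N. \<Sum>j\<in>UNIV. \<Sum>l<m i. \<bar>H i l j\<bar>) * (real t + 1) powr \<gamma>"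
        by (intro mult_left_mono)
      with sum_norm_HTmul_le_noise_norm show ?case by (rule order.trans)
    qed
  qed (use lam(1) ab taus rho0(2) gamma in simp_all)
qed

lemma event_triggered_gap_rate:
  fixes N :: nat and m :: "nat \<Rightarrow> nat" and H :: "nat \<Rightarrow> nat \<Rightarrow> 'n::finite \<Rightarrow> real"
    and \<theta> :: "real^'n" and v :: "nat \<Rightarrow> nat \<Rightarrow> 'a \<Rightarrow> nat \<Rightarrow> real"
    and \<rho> :: "nat \<Rightarrow> real" and x0 :: "nat \<Rightarrow> real^'n" and u0 :: "real^'n"
    and a b \<tau>1 \<tau>2 \<rho>0 \<gamma> \<tau>0 :: real
  defines "\<alpha> \<equiv> \<lambda>t. a / (real t + 1) powr \<tau>1" and "\<beta> \<equiv> \<lambda>t. b / (real t + 1) powr \<tau>2"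
  assumes N_pos: "0 < N" and graph: "undirected_simple N adj" and conn: "graph_connected N adj"
    and full_rank: "rank (gram N H m) = CARD('n)"
    and ab: "0 < a" "0 < b" and taus: "0 < \<tau>2" "\<tau>2 < \<tau>1" "\<tau>1 \<le> 1"
    and rho0: "\<forall>j<N. \<rho>0 \<le> \<rho> j" "\<tau>1 - \<tau>2 < \<rho>0" and gamma: "0 \<le> \<gamma>"
    and noise: "eventually (\<lambda>t. noise_norm N m v t \<omega> \<le> (real t + 1) powr \<gamma>) sequentially"
    and tau0: "\<tau>0 < \<tau>1 - \<tau>2 - \<gamma>" "\<tau>0 < \<rho>0 + \<tau>2 - \<tau>1"
    and tau1_one: "\<tau>1 = 1 \<Longrightarrow> a > real N * \<tau>0 / lambda_min (gram N H m)"
    and i: "i < N"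
  shows "(\<lambda>t. (real t + 1) powr \<tau>0 * norm (et_est N adj H m v \<theta> \<alpha> \<beta> \<rho> x0 \<omega> t i
            - cent_est N H m v \<theta> \<alpha> u0 \<omega> t)) \<longlonglongrightarrow> 0"
proof -
  define x where "x t = fst (et_state N adj H m v \<theta> \<alpha> \<beta> \<rho> x0 \<omega> t)" for t
  define xh where "xh t = snd (et_state N adj H m v \<theta> \<alpha> \<beta> \<rho> x0 \<omega> t)" for t
  define u where "u = cent_est N H m v \<theta> \<alpha> u0 \<omega>"
  define C where "C = (\<Sum>i<N. \<Sum>j\<in>UNIV. \<Sum>l<m i. \<bar>H i l j\<bar>)"
  obtain \<kappa> where "consensus_recursion_rates N adj (gram_block H m) \<theta> \<alpha> \<beta> x xh
      (\<lambda>t i. HTmul H m i (v i t \<omega>)) u \<kappa> (lambda_min (gram N H m)) a b \<tau>1 \<tau>2 \<rho>0 \<gamma> C"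
    unfolding x_def xh_def u_def C_def \<alpha>_def \<beta>_def
    by (rule consensus_recursion_rates_event_triggered
        [OF N_pos graph conn full_rank ab taus rho0 gamma noise])
  then interpret consensus_recursion_rates N adj "gram_block H m" \<theta> \<alpha> \<beta> x xh
      "\<lambda>t i. HTmul H m i (v i t \<omega>)" u \<kappa> "lambda_min (gram N H m)" a b \<tau>1 \<tau>2 \<rho>0 \<gamma> C .
  have "\<tau>0 < a * lambda_min (gram N H m) / N" if "\<tau>1 = 1"
    using tau1_one[OF that] lam_pos N_pos by (simp add: field_simps)
  with estimate_gap_rate[OF tau0 _ i] show ?thesis by (simp add: et_est_def x_def u_def)
qed

lemma AE_noise_norm_le_powr:
  assumes "prob_space M"
    and indep: "prob_space.indep_vars M (\<lambda>_. noise_space N m) (\<lambda>t. stacked_noise N m v t) UNIV"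
    and ident: "\<forall>t. distr M (noise_space N m) (stacked_noise N m v t)
                   = distr M (noise_space N m) (stacked_noise N m v 0)"
    and moment: "integrable M (\<lambda>\<omega>. noise_norm N m v 0 \<omega> powr p)"
    and p: "0 < p" and \<gamma>: "1 < \<gamma> * p"
  shows "AE \<omega> in M. eventually (\<lambda>t. noise_norm N m v t \<omega> \<le> (real t + 1) powr \<gamma>) sequentially"
proof (rule AE_eventually_le_powr[where X = "noise_norm N m v", OF assms(1) _ _ moment p \<gamma>])
  interpret prob_space M by fact
  define g where "g f = sqrt (\<Sum>i<N. \<Sum>l<m i. (f (i, l))\<^sup>2)" for f :: "nat \<times> nat \<Rightarrow> real"
  have "(\<lambda>f. f (i, l)) \<in> borel_measurable (noise_space N m)" if "i < N" "l < m i" for i l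
    unfolding noise_space_def
    by (rule measurable_component_singleton) (use that in \<open>simp add: noise_idx_def\<close>)
  then have "(\<lambda>f. \<Sum>i<N. \<Sum>l<m i. (f (i, l))\<^sup>2) \<in> borel_measurable (noise_space N m)"
    by (intro borel_measurable_sum borel_measurable_power) auto
  then have g: "g \<in> borel_measurable (noise_space N m)"
    unfolding g_def by (rule measurable_compose[OF _ borel_measurable_sqrt])
  have V: "stacked_noise N m v t \<in> M \<rightarrow>\<^sub>M noise_space N m" for t
    using indep by (simp add: indep_vars_def)
  have comp: "noise_norm N m v t = g \<circ> stacked_noise N m v t" for t
    by (auto simp: noise_norm_def g_def stacked_noise_def noise_idx_def)
  show "noise_norm N m v t \<in> borel_measurable M" for t
    unfolding comp using V g by (rule measurable_comp)
  show "distr M borel (noise_norm N m v t) = distr M borel (noise_norm N m v 0)" for t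
    unfolding comp using ident distr_distr[OF g V] by metis
qed

theorem theorem4:
  fixes M :: "'a measure"
    and N :: nat and m :: "nat \<Rightarrow> nat"
    and H :: "nat \<Rightarrow> nat \<Rightarrow> 'n::finite \<Rightarrow> real"
    and \<theta> :: "real^'n"
    and v :: "nat \<Rightarrow> nat \<Rightarrow> 'a \<Rightarrow> nat \<Rightarrow> real"
    and adj :: "nat \<Rightarrow> nat \<Rightarrow> bool"
    and \<rho> :: "nat \<Rightarrow> real"
    and x0 :: "nat \<Rightarrow> real^'n" and u0 :: "real^'n"
    and a b \<tau>1 \<tau>2 a_c \<tau>_c \<epsilon>1 \<tau>0 :: real
  assumes P: "prob_space M"
    and N_pos: "0 < N"
    and graph: "undirected_simple N adj"
    and rho_pos: "\<forall>i<N. 0 < \<rho> i"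
    and noise_mean: "\<forall>t. \<forall>i<N. \<forall>l<m i. prob_space.expectation M (\<lambda>\<omega>. v i t \<omega> l) = 0"
    and noise_indep: "prob_space.indep_vars M (\<lambda>_. noise_space N m) (\<lambda>t. stacked_noise N m v t) UNIV"
    and noise_ident: "\<forall>t. distr M (noise_space N m) (stacked_noise N m v t)
                          = distr M (noise_space N m) (stacked_noise N m v 0)"
    and conn: "graph_connected N adj"
    and full_rank: "rank (gram N H m) = CARD('n)"
    and eps_pos: "0 < \<epsilon>1"
    and moment: "\<forall>t. integrable M (\<lambda>\<omega>. noise_norm N m v t \<omega> powr (2 + \<epsilon>1))"
    and ab: "0 < a" "0 < b"
    and taus: "0 < \<tau>2" "\<tau>2 \<le> \<tau>1" "\<tau>1 \<le> 1"
    and tau1_big: "\<tau>1 > max (\<tau>2 + 1 / (2 + \<epsilon>1)) 0.5"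
    and cent: "\<tau>_c = \<tau>1" "a_c = a"
    and rho0: "Min (\<rho> ` {..<N}) > \<tau>1 - \<tau>2"
    and tau0: "0 \<le> \<tau>0"
       "\<tau>0 < min (\<tau>1 - \<tau>2 - 1 / (2 + \<epsilon>1)) (Min (\<rho> ` {..<N}) + \<tau>2 - \<tau>1)"
    and tau1_one: "\<tau>1 = 1 \<Longrightarrow> a > real N * \<tau>0 / lambda_min (gram N H m)"
  shows "\<forall>i<N. AE \<omega> in M.
           ((\<lambda>t. (real t + 1) powr \<tau>0 *
              norm (et_est N adj H m v \<theta> (\<lambda>t. a / (real t + 1) powr \<tau>1) (\<lambda>t. b / (real t + 1) powr \<tau>2)
                       \<rho> x0 \<omega> t i
                    - cent_est N H m v \<theta> (\<lambda>t. a_c / (real t + 1) powr \<tau>_c) u0 \<omega> t))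
            \<longlonglongrightarrow> 0)"
proof -
  define q where "q = 1 / (2 + \<epsilon>1)"
  define \<gamma> where "\<gamma> = (q + (\<tau>1 - \<tau>2 - \<tau>0)) / 2"
  have "0 < q" "q < \<tau>1 - \<tau>2 - \<tau>0"
    using tau0(2) eps_pos by (auto simp: q_def)
  then have \<gamma>: "q < \<gamma>" "0 \<le> \<gamma>" "\<tau>0 < \<tau>1 - \<tau>2 - \<gamma>"
    unfolding \<gamma>_def by (simp_all add: field_simps)
  have "\<tau>2 + q < \<tau>1" using tau1_big by (simp add: q_def)
  then have tau21: "\<tau>2 < \<tau>1" using \<open>0 < q\<close> by linarith
  have rho_min: "\<forall>j<N. Min (\<rho> ` {..<N}) \<le> \<rho> j" by simp
  have "AE \<omega> in M. eventually (\<lambda>t. noise_norm N m v t \<omega> \<le> (real t + 1) powr \<gamma>) sequentially"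
    using eps_pos moment \<gamma>(1)
    by (intro AE_noise_norm_le_powr[OF P noise_indep noise_ident]) (auto simp: q_def divide_less_eq)
  then show ?thesis
    using event_triggered_gap_rate[OF N_pos graph conn full_rank ab taus(1) tau21 taus(3) rho_min rho0
        \<gamma>(2) _ \<gamma>(3) _ tau1_one] tau0(2)
    unfolding cent by (auto elim!: eventually_mono)
qed

end
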